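(* Assume $(\lrcorner)$. Then there exist a map $c:[\omega_2]^2\to\omega_1$, a monotone map $m:[\omega_2]^{<\omega}\to[\omega_2]^{<\omega}$ and a map $r:\omega_2\to\omega_2$ such that: (1) for every $a\in[\omega_2]^{<\omega}$ and all $\alpha,\beta\in m(a)$ with $\alpha\neq\beta$, we have $\mathcal{A}^c_{\alpha,\beta}\subseteq m(a)$; (2) whenever $d$ is a finite subset of $\omega_2+\omega$, $e:[d]^2\to\omega_1$ and $s:d\to\omega_2$ are functions with $c\restriction[d\cap\omega_2]^2=e\restriction[d\cap\omega_2]^2$, $r\restriction(d\cap\omega_2)=s\restriction(d\cap\omega_2)$, and $\mathcal{A}^e_{\alpha,\beta}\subseteq\omega_2$ for all $\alpha,\beta\in d\cap\omega_2$ with $\alpha\neq\beta$, there exists an injection $\iota:d\to\omega_2$ with $\iota\restriction(d\cap\omega_2)=\mathrm{id}_{d\cap\omega_2}$, $c(\iota(\alpha),\iota(\beta))=e(\alpha,\beta)$ for all distinct $\alpha,\beta\in d$, and $r(\iota(\alpha))=s(\alpha)$ for all $\alpha\in d$.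
   Context: For a set $d$, $[d]^2$ is the set of two-element subsets of $d$ and $[d]^{<\omega}$ the set of finite subsets; for a function $c$ with domain $[d]^2$ write $c(x,y)$ for $c(\{x,y\})$, and for distinct $x,y\in d$ let $\mathcal{A}^c_{x,y}=\{z\in d\setminus\{x,y\}: c(x,z)=c(y,z)\}$. A map $m:[X]^{<\omega}\to[X]^{<\omega}$ is monotone if $a\subseteq m(a)$ for all finite $a\subseteq X$. The principle $(\lrcorner)$: for every sequence $\langle f_\alpha:\alpha<\omega_1\rangle$ of functions from $\omega_1$ to $\omega_1$, every finite $F\subseteq\omega_1$ and every monotone $m:[\omega_1]^{<\omega}\to[\omega_1]^{<\omega}$, there is $g:\omega_1\to\omega_1$ with $F\cap\mathrm{ran}(g)=\emptyset$ such that for every $a\in[\omega_1]^{<\omega}$ there is $b\in[\omega_1]^{<\omega}$ with $a\subseteq b$ and $\{\beta<\omega_1: f_\alpha(\beta)=g(\beta)\}\subseteq m(b)$ for all $\alpha\in m(b)$. *)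

theory Defs
  imports Main
begin

definition omega1 :: "nat set set" where
  "omega1 = Field (cardSuc natLeq)"

definition omega2 :: "nat set set set" where
  "omega2 = Field (cardSuc (cardSuc natLeq))"

definition omega2_plus_omega :: "(nat set set + nat) set" where
  "omega2_plus_omega = Inl ` omega2 \<union> range Inr"

definition pairs :: "'a set \<Rightarrow> 'a set set" where
  "pairs d = {p. \<exists>x\<in>d. \<exists>y\<in>d. x \<noteq> y \<and> p = {x, y}}"

definition finsubs :: "'a set \<Rightarrow> 'a set set" where
  "finsubs X = {a. a \<subseteq> X \<and> finite a}"

definition monotone_fin :: "'a set \<Rightarrow> ('a set \<Rightarrow> 'a set) \<Rightarrow> bool" where
  "monotone_fin X m \<longleftrightarrow> (\<forall>a\<in>finsubs X. m a \<in> finsubs X \<and> a \<subseteq> m a)"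

definition Aset :: "('a set \<Rightarrow> 'b) \<Rightarrow> 'a set \<Rightarrow> 'a \<Rightarrow> 'a \<Rightarrow> 'a set" where
  "Aset c d x y = {z \<in> d - {x, y}. c {x, z} = c {y, z}}"

definition lrcorner :: bool where
  "lrcorner \<longleftrightarrow>
    (\<forall>f :: nat set \<Rightarrow> nat set \<Rightarrow> nat set.
      (\<forall>\<alpha>\<in>omega1. \<forall>\<beta>\<in>omega1. f \<alpha> \<beta> \<in> omega1) \<longrightarrow>
      (\<forall>F\<in>finsubs omega1. \<forall>m. monotone_fin omega1 m \<longrightarrow>
        (\<exists>g. (\<forall>\<beta>\<in>omega1. g \<beta> \<in> omega1) \<and> F \<inter> g ` omega1 = {} \<and>
          (\<forall>a\<in>finsubs omega1. \<exists>b\<in>finsubs omega1. a \<subseteq> b \<and>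
             (\<forall>\<alpha>\<in>m b. {\<beta>\<in>omega1. f \<alpha> \<beta> = g \<beta>} \<subseteq> m b)))))"

end

theory Submission
  imports Defs "HOL-Algebra.Free_Abelian_Groups"
begin

text \<open>
  The colouring \<open>c\<close> and the closure operator \<open>m\<close> are built together by recursion along a
  well-order of \<open>\<omega>\<^sub>2\<close> of type \<open>\<omega>\<^sub>2\<close> in which \<open>\<omega>\<^sub>2\<close> is cut into \<open>\<omega>\<close>-blocks; by bookkeeping every
  finite requirement \<open>(d, e, s)\<close> is attached to blocks lying above any finite set. At the \<open>k\<close>-th point
  \<open>z\<close> of a block, the colours of \<open>{y, z}\<close> for the points \<open>y\<close> named by the requirement are prescribed
  by \<open>e\<close>; every other \<open>y < z\<close> gets the code \<open>(g \<eta>, \<eta>)\<close>, where \<open>\<eta> \<in> \<omega>\<^sub>1\<close> codes \<open>y\<close> and \<open>g\<close> is given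
  by \<open>(\<lrcorner>)\<close> applied to the colouring and closure already built below \<open>z\<close>, avoiding the finitely
  many prescribed colours.

  Then two points \<open>\<alpha> < \<beta> < w\<close> with \<open>c(\<alpha>, w) = c(\<beta>, w)\<close> force \<open>w\<close> to be a later point of the
  block of \<open>\<beta>\<close>, and the closure property of \<open>g\<close> controls the remaining pairs, so closing a finite
  set under the sets \<open>\<A>\<^sup>c\<close> stays finite. A requirement is realized by sending its new points to a
  block carrying it; the hypothesis on \<open>\<A>\<^sup>e\<close> is what makes the prescribed colours at a new point
  distinct.
\<close>

section \<open>The recursive construction\<close>

definition lr_witness :: "'c set \<Rightarrow> ('c \<Rightarrow> 'c \<Rightarrow> 'c) \<Rightarrow> 'c set \<Rightarrow> ('c set \<Rightarrow> 'c set) \<Rightarrow> ('c \<Rightarrow> 'c) \<Rightarrow> bool" where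
  "lr_witness Om f F m g \<longleftrightarrow> (\<forall>\<beta>\<in>Om. g \<beta> \<in> Om) \<and> F \<inter> g ` Om = {} \<and>
          (\<forall>a\<in>finsubs Om. \<exists>b\<in>finsubs Om. a \<subseteq> b \<and>
             (\<forall>\<alpha>\<in>m b. {\<beta>\<in>Om. f \<alpha> \<beta> = g \<beta>} \<subseteq> m b))"

text \<open>\<open>Om1\<close> plays \<open>\<omega>\<^sub>1\<close> and \<open>P\<close> plays \<open>\<omega>\<^sub>2\<close>, well-ordered by \<open>R\<close> with every initial segment injected
  into \<open>Om1\<close> by \<open>emb\<close>. \<open>P\<close> is partitioned into the \<open>R\<close>-convex blocks \<open>point \<xi> 0 < point \<xi> 1 < \<dots>\<close>,
  and \<open>req \<xi>\<close> is the requirement attached to block \<open>\<xi>\<close>.\<close>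
locale coloring_construction =
  fixes Om1 :: "'c set" and pair :: "'c \<times> 'c \<Rightarrow> 'c" and dflt :: 'c
    and P :: "'p set" and R :: "('p \<times> 'p) set" and emb :: "'p \<Rightarrow> 'p \<Rightarrow> 'c"
    and S :: "'s set" and point :: "'s \<Rightarrow> nat \<Rightarrow> 'p" and block :: "'p \<Rightarrow> 's" and index :: "'p \<Rightarrow> nat"
    and req :: "'s \<Rightarrow> ('p + nat) set \<times> (('p + nat) set \<Rightarrow> 'c) \<times> ('p + nat \<Rightarrow> 'p)"
  assumes lrcorner_principle: "\<And>f F m. (\<forall>\<alpha>\<in>Om1. \<forall>\<beta>\<in>Om1. f \<alpha> \<beta> \<in> Om1) \<Longrightarrow> F \<in> finsubs Om1 \<Longrightarrow>
        monotone_fin Om1 m \<Longrightarrow> \<exists>g. lr_witness Om1 f F m g"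
    and pair_inj: "inj_on pair (Om1 \<times> Om1)"
    and pair_in: "\<And>u v. u \<in> Om1 \<Longrightarrow> v \<in> Om1 \<Longrightarrow> pair (u, v) \<in> Om1"
    and dflt_in: "dflt \<in> Om1"
    and wfR: "wf R" and R_P: "R \<subseteq> P \<times> P" and transR: "trans R"
    and totR: "\<And>x y. x \<in> P \<Longrightarrow> y \<in> P \<Longrightarrow> x \<noteq> y \<Longrightarrow> (x, y) \<in> R \<or> (y, x) \<in> R"
    and emb: "\<And>z. z \<in> P \<Longrightarrow> inj_on (emb z) {y. (y, z) \<in> R} \<and> emb z ` {y. (y, z) \<in> R} \<subseteq> Om1"
    and point_in: "\<And>\<xi> k. \<xi> \<in> S \<Longrightarrow> point \<xi> k \<in> P"
    and block_point: "\<And>\<xi> k. \<xi> \<in> S \<Longrightarrow> block (point \<xi> k) = \<xi>"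
    and index_point: "\<And>\<xi> k. \<xi> \<in> S \<Longrightarrow> index (point \<xi> k) = k"
    and point_block_index: "\<And>z. z \<in> P \<Longrightarrow> block z \<in> S \<and> point (block z) (index z) = z"
    and point_R_iff: "\<And>\<xi> i k. \<xi> \<in> S \<Longrightarrow> (point \<xi> i, point \<xi> k) \<in> R \<longleftrightarrow> i < k"
    and block_convex: "\<And>\<xi> i j y. \<xi> \<in> S \<Longrightarrow> (point \<xi> i, y) \<in> R \<Longrightarrow> (y, point \<xi> j) \<in> R \<Longrightarrow> block y = \<xi>"
    and req_cofinal: "\<And>d e s. finite d \<Longrightarrow> d \<subseteq> Inl ` P \<union> range Inr \<Longrightarrow>
        (\<forall>p. p \<notin> pairs d \<longrightarrow> e p = undefined) \<Longrightarrow> (\<forall>p\<in>pairs d. e p \<in> Om1) \<Longrightarrow>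
        (\<forall>x. x \<notin> d \<longrightarrow> s x = undefined) \<Longrightarrow> (\<forall>x\<in>d. s x \<in> P) \<Longrightarrow>
        \<exists>\<xi>\<in>S. req \<xi> = (d, e, s) \<and> (\<forall>\<alpha>. Inl \<alpha> \<in> d \<longrightarrow> (\<alpha>, point \<xi> 0) \<in> R)"
begin

definition below :: "'p \<Rightarrow> 'p set" where "below z = {y. (y, z) \<in> R}"
definition below_eq :: "'p \<Rightarrow> 'p set" where "below_eq z = insert z (below z)"

lemma R_irrefl: "(x, x) \<notin> R"
  using wfR by (meson wf_not_refl)
lemma R_asym: "(x, y) \<in> R \<Longrightarrow> (y, x) \<notin> R"
  using wfR by (meson wf_not_sym)
lemma R_trans: "(x, y) \<in> R \<Longrightarrow> (y, z) \<in> R \<Longrightarrow> (x, z) \<in> R"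
  using transR by (meson transD)
lemma R_fst_in: "(x, y) \<in> R \<Longrightarrow> x \<in> P" using R_P by auto
lemma R_snd_in: "(x, y) \<in> R \<Longrightarrow> y \<in> P" using R_P by auto

lemma below_subset: "below z \<subseteq> P" unfolding below_def using R_P by auto
lemma below_eq_subset: "z \<in> P \<Longrightarrow> below_eq z \<subseteq> P" unfolding below_eq_def using below_subset by auto

definition R_max :: "'p set \<Rightarrow> 'p" where "R_max a = (THE y. y \<in> a \<and> a \<subseteq> below_eq y)"

lemma R_max_exists: "finite a \<Longrightarrow> a \<noteq> {} \<Longrightarrow> a \<subseteq> P \<Longrightarrow> \<exists>y\<in>a. a \<subseteq> below_eq y"
proof (induction a rule: finite_ne_induct)
  case (singleton x) then show ?case by (auto simp: below_eq_def)
next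
  case (insert x F)
  then obtain y where y: "y \<in> F" "F \<subseteq> below_eq y" by auto
  have "x \<in> P" "y \<in> P" using insert y by auto
  show ?case
  proof (cases "(y, x) \<in> R")
    case True
    then have "F \<subseteq> below_eq x" using y(2) by (auto simp: below_eq_def below_def intro: R_trans)
    then show ?thesis by (auto simp: below_eq_def)
  next
    case False
    then have "x \<in> below_eq y" using totR[OF \<open>x \<in> P\<close> \<open>y \<in> P\<close>] by (auto simp: below_eq_def below_def)
    then show ?thesis using y by auto
  qed
qed

lemma R_max_unique: "y \<in> a \<Longrightarrow> a \<subseteq> below_eq y \<Longrightarrow> y' \<in> a \<Longrightarrow> a \<subseteq> below_eq y' \<Longrightarrow> y = y'"
proof -
  assume h: "y \<in> a" "a \<subseteq> below_eq y" "y' \<in> a" "a \<subseteq> below_eq y'"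
  then have "y' = y \<or> (y', y) \<in> R" "y = y' \<or> (y, y') \<in> R" unfolding below_eq_def below_def by auto
  then show ?thesis using R_asym by blast
qed

lemma R_max_greatest: "finite a \<Longrightarrow> a \<noteq> {} \<Longrightarrow> a \<subseteq> P \<Longrightarrow> R_max a \<in> a \<and> a \<subseteq> below_eq (R_max a)"
proof -
  assume h: "finite a" "a \<noteq> {}" "a \<subseteq> P"
  obtain y where y: "y \<in> a" "a \<subseteq> below_eq y" using R_max_exists[OF h] by blast
  have "R_max a = y" unfolding R_max_def
    by (rule the_equality) (use y R_max_unique in blast)+
  then show ?thesis using y by simp
qed

definition req_dom :: "'s \<Rightarrow> ('p + nat) set" where "req_dom \<xi> = fst (req \<xi>)"
definition req_color :: "'s \<Rightarrow> ('p + nat) set \<Rightarrow> 'c" where "req_color \<xi> = fst (snd (req \<xi>))"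
definition req_val :: "'s \<Rightarrow> 'p + nat \<Rightarrow> 'p" where "req_val \<xi> = snd (snd (req \<xi>))"
definition req_old :: "'s \<Rightarrow> 'p set" where "req_old \<xi> = {\<alpha>. Inl \<alpha> \<in> req_dom \<xi>}"
definition req_new :: "'s \<Rightarrow> nat set" where "req_new \<xi> = {k. Inr k \<in> req_dom \<xi>}"

definition admissible :: "'s \<Rightarrow> bool" where
  "admissible \<xi> \<longleftrightarrow> finite (req_dom \<xi>) \<and> (\<forall>\<alpha>\<in>req_old \<xi>. (\<alpha>, point \<xi> 0) \<in> R) \<and>
     (\<forall>k\<in>req_new \<xi>. (\<forall>\<alpha>\<in>req_old \<xi>. req_color \<xi> {Inl \<alpha>, Inr k} \<in> Om1) \<and>
        (\<forall>i\<in>req_new \<xi>. i \<noteq> k \<longrightarrow> req_color \<xi> {Inr i, Inr k} \<in> Om1)) \<and>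
     (\<forall>k\<in>req_new \<xi>. \<forall>\<alpha>\<in>req_old \<xi>. \<forall>\<beta>\<in>req_old \<xi>. \<alpha> \<noteq> \<beta> \<longrightarrow>
        req_color \<xi> {Inl \<alpha>, Inr k} \<noteq> req_color \<xi> {Inl \<beta>, Inr k}) \<and>
     (\<forall>k\<in>req_new \<xi>. req_val \<xi> (Inr k) \<in> P)"

definition active :: "'p \<Rightarrow> bool" where "active z \<longleftrightarrow> admissible (block z) \<and> index z \<in> req_new (block z)"

definition prescribed :: "'p \<Rightarrow> 'p set" where
  "prescribed z = (if active z
     then req_old (block z) \<union> point (block z) ` {i \<in> req_new (block z). i < index z} else {})"

definition prescribed_color :: "'p \<Rightarrow> 'p \<Rightarrow> 'c" where
  "prescribed_color z y = (if y \<in> req_old (block z) then req_color (block z) {Inl y, Inr (index z)}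
     else req_color (block z) {Inr (index y), Inr (index z)})"

definition later :: "'p \<Rightarrow> 'p set" where
  "later \<beta> = (if admissible (block \<beta>)
     then point (block \<beta>) ` {k \<in> req_new (block \<beta>). index \<beta> < k} else {})"

definition saturate :: "'p set \<Rightarrow> 'p set \<Rightarrow> 'p set" where
  "saturate B a = a \<union> (\<Union>(later ` a) \<inter> B)"

definition unpair1 :: "'c \<Rightarrow> 'c \<Rightarrow> 'c" where
  "unpair1 v \<eta> = (if \<exists>u\<in>Om1. v = pair (u, \<eta>) then (SOME u. u \<in> Om1 \<and> v = pair (u, \<eta>)) else dflt)"

text \<open>The recursion computes at \<open>z\<close> the colours \<open>c(y, z)\<close> for \<open>y < z\<close> and the value of \<open>m\<close> on the
  finite sets with maximum \<open>z\<close>; \<open>lr_fun\<close>, \<open>lr_forbidden\<close> and \<open>lr_hull\<close> are the inputs \<open>f\<close>, \<open>F\<close>,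
  \<open>m\<close> of \<open>(\<lrcorner>)\<close> at \<open>z\<close>, transported to \<open>Om1\<close> along \<open>emb z\<close>.\<close>
type_synonym ('a, 'b) stage_data = "('a \<Rightarrow> 'b) \<times> ('a set \<Rightarrow> 'a set)"

definition color_from :: "('p \<Rightarrow> ('p, 'c) stage_data) \<Rightarrow> 'p \<Rightarrow> 'p \<Rightarrow> 'c" where
  "color_from h x y = (if (x, y) \<in> R then fst (h y) x else fst (h x) y)"

definition hull_from :: "('p \<Rightarrow> ('p, 'c) stage_data) \<Rightarrow> 'p set \<Rightarrow> 'p set" where
  "hull_from h a = (if a \<noteq> {} \<and> R_max a \<in> a then snd (h (R_max a)) a else {})"

definition lr_fun :: "('p \<Rightarrow> ('p, 'c) stage_data) \<Rightarrow> 'p \<Rightarrow> 'c \<Rightarrow> 'c \<Rightarrow> 'c" where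
  "lr_fun h z \<alpha> \<eta> = (if \<alpha> \<in> emb z ` below z \<and> \<eta> \<in> emb z ` below z \<and> \<alpha> \<noteq> \<eta>
     then unpair1 (color_from h (inv_into (below z) (emb z) \<alpha>) (inv_into (below z) (emb z) \<eta>)) \<eta>
     else dflt)"

definition lr_forbidden :: "'p \<Rightarrow> 'c set" where
  "lr_forbidden z =
     insert dflt ((\<lambda>v. fst (inv_into (Om1 \<times> Om1) pair v)) ` (prescribed_color z ` prescribed z) \<inter> Om1)"

definition emb_preimage :: "'p \<Rightarrow> 'c set \<Rightarrow> 'p set" where
  "emb_preimage z a = {y \<in> below z. emb z y \<in> a}"

definition hull_below :: "('p \<Rightarrow> ('p, 'c) stage_data) \<Rightarrow> 'p \<Rightarrow> 'p set \<Rightarrow> 'p set" where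
  "hull_below h z a0 = hull_from h (saturate (below z) a0)"

definition lr_hull :: "('p \<Rightarrow> ('p, 'c) stage_data) \<Rightarrow> 'p \<Rightarrow> 'c set \<Rightarrow> 'c set" where
  "lr_hull h z a = a \<union> emb z ` hull_below h z (emb_preimage z a)"

definition lr_g :: "('p \<Rightarrow> ('p, 'c) stage_data) \<Rightarrow> 'p \<Rightarrow> 'c \<Rightarrow> 'c" where
  "lr_g h z = (SOME g. lr_witness Om1 (lr_fun h z) (lr_forbidden z) (lr_hull h z) g)"

definition color_step :: "('p \<Rightarrow> ('p, 'c) stage_data) \<Rightarrow> 'p \<Rightarrow> 'p \<Rightarrow> 'c" where
  "color_step h z y =
     (if y \<in> prescribed z then prescribed_color z y else pair (lr_g h z (emb z y), emb z y))"

definition lr_closed :: "('c \<Rightarrow> 'c \<Rightarrow> 'c) \<Rightarrow> ('c set \<Rightarrow> 'c set) \<Rightarrow> ('c \<Rightarrow> 'c) \<Rightarrow> 'c set \<Rightarrow> bool" where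
  "lr_closed f m g b \<longleftrightarrow> b \<in> finsubs Om1 \<and> (\<forall>\<alpha>\<in>m b. {\<beta>\<in>Om1. f \<alpha> \<beta> = g \<beta>} \<subseteq> m b)"

definition lr_cover :: "('p \<Rightarrow> ('p, 'c) stage_data) \<Rightarrow> 'p \<Rightarrow> 'p set \<Rightarrow> 'p set" where
  "lr_cover h z a0 =
     emb_preimage z (SOME b. emb z ` a0 \<subseteq> b \<and> lr_closed (lr_fun h z) (lr_hull h z) (lr_g h z) b)"

definition hull_step :: "('p \<Rightarrow> ('p, 'c) stage_data) \<Rightarrow> 'p \<Rightarrow> 'p set \<Rightarrow> 'p set" where
  "hull_step h z a = insert z (hull_below h z (lr_cover h z ((a - {z}) \<union> prescribed z)))"

definition stage_step :: "('p \<Rightarrow> ('p, 'c) stage_data) \<Rightarrow> 'p \<Rightarrow> ('p, 'c) stage_data" where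
  "stage_step h z = (color_step h z, hull_step h z)"

definition stage :: "'p \<Rightarrow> ('p, 'c) stage_data" where "stage = wfrec R stage_step"

lemma stage_unfold: "stage z = stage_step stage z"
proof -
  let ?h = "cut stage R z"
  have h: "?h y = stage y" if "y \<in> below z" for y using that by (simp add: below_def cut_apply)
  have col: "color_from ?h x y = color_from stage x y" if "x \<in> below z" "y \<in> below z" for x y
    unfolding color_from_def using h that by simp
  have hull_from: "hull_from ?h a = hull_from stage a" if "a \<subseteq> below z" for a
    unfolding hull_from_def using h that by auto
  have lr_fun: "lr_fun ?h z = lr_fun stage z"
    unfolding lr_fun_def by (intro ext) (auto simp: col inv_into_into)
  have hull_below: "hull_below ?h z (emb_preimage z a) = hull_below stage z (emb_preimage z a)" for a
    unfolding hull_below_def by (rule hull_from) (auto simp: saturate_def emb_preimage_def)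
  have lr_hull: "lr_hull ?h z = lr_hull stage z"
    unfolding lr_hull_def hull_below ..
  have "hull_step ?h z = hull_step stage z" "color_step ?h z = color_step stage z"
    unfolding hull_step_def color_step_def lr_cover_def lr_g_def lr_fun lr_hull hull_below by simp_all
  then have "stage_step ?h z = stage_step stage z" unfolding stage_step_def by simp
  moreover have "stage z = stage_step ?h z" unfolding stage_def by (rule wfrec[OF wfR])
  ultimately show ?thesis by simp
qed

definition color_at :: "'p \<Rightarrow> 'p \<Rightarrow> 'c" where "color_at z = fst (stage z)"
definition hull_at :: "'p \<Rightarrow> 'p set \<Rightarrow> 'p set" where "hull_at z = snd (stage z)"
definition col :: "'p \<Rightarrow> 'p \<Rightarrow> 'c" where "col = color_from stage"
definition coloring :: "'p set \<Rightarrow> 'c" where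
  "coloring p = col (SOME x. x \<in> p) (SOME y. y \<in> p \<and> y \<noteq> (SOME x. x \<in> p))"

lemma color_at_eq: "color_at z = color_step stage z"
  unfolding color_at_def using stage_unfold by (simp add: stage_step_def)
lemma hull_at_eq: "hull_at z = hull_step stage z"
  unfolding hull_at_def using stage_unfold by (simp add: stage_step_def)

lemma col_below: "(x, y) \<in> R \<Longrightarrow> col x y = color_at y x"
  unfolding col_def color_from_def color_at_def by simp
lemma col_above: "(y, x) \<in> R \<Longrightarrow> col x y = color_at x y"
proof -
  assume h: "(y, x) \<in> R"
  then have "(x, y) \<notin> R" using R_asym by blast
  then show ?thesis unfolding col_def color_from_def color_at_def by simp
qed
lemma col_sym: "x \<in> P \<Longrightarrow> y \<in> P \<Longrightarrow> x \<noteq> y \<Longrightarrow> col x y = col y x"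
proof -
  assume h: "x \<in> P" "y \<in> P" "x \<noteq> y"
  then consider "(x, y) \<in> R" | "(y, x) \<in> R" using totR by blast
  then show ?thesis
  proof cases
    case 1 then show ?thesis using col_below[OF 1] col_above[OF 1] by simp
  next
    case 2 then show ?thesis using col_below[OF 2] col_above[OF 2] by simp
  qed
qed
lemma coloring_pair: "x \<in> P \<Longrightarrow> y \<in> P \<Longrightarrow> x \<noteq> y \<Longrightarrow> coloring {x, y} = col x y"
proof -
  assume h: "x \<in> P" "y \<in> P" "x \<noteq> y"
  define u where "u = (SOME u. u \<in> {x, y})"
  have u: "u \<in> {x, y}" unfolding u_def by (rule someI[of _ x]) simp
  define v where "v = (SOME v. v \<in> {x, y} \<and> v \<noteq> u)"
  have ex: "\<exists>v. v \<in> {x, y} \<and> v \<noteq> u" using u h(3) by auto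
  have v: "v \<in> {x, y} \<and> v \<noteq> u" unfolding v_def by (rule someI_ex[OF ex])
  have "coloring {x, y} = col u v" unfolding coloring_def u_def v_def ..
  also have "\<dots> = col x y" using u v col_sym h by auto
  finally show ?thesis .
qed

lemma point_block_index_eq: "z \<in> P \<Longrightarrow> point (block z) (index z) = z" using point_block_index by blast
lemma block_in: "z \<in> P \<Longrightarrow> block z \<in> S" using point_block_index by blast

lemma finite_req_new: "admissible \<xi> \<Longrightarrow> finite (req_new \<xi>)"
proof -
  assume v: "admissible \<xi>"
  have "req_new \<xi> = Inr -` req_dom \<xi>" unfolding req_new_def by auto
  then show ?thesis using v finite_vimageI[of "req_dom \<xi>" Inr] unfolding admissible_def by simp
qed
lemma finite_req_old: "admissible \<xi> \<Longrightarrow> finite (req_old \<xi>)"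
proof -
  assume v: "admissible \<xi>"
  have "req_old \<xi> = Inl -` req_dom \<xi>" unfolding req_old_def by auto
  then show ?thesis using v finite_vimageI[of "req_dom \<xi>" Inl] unfolding admissible_def by simp
qed

lemma finite_prescribed: "finite (prescribed z)"
  unfolding prescribed_def active_def using finite_req_new finite_req_old by auto
lemma finite_later: "finite (later z)"
  unfolding later_def using finite_req_new by auto

lemma point_0_le: "\<xi> \<in> S \<Longrightarrow> point \<xi> 0 = point \<xi> k \<or> (point \<xi> 0, point \<xi> k) \<in> R"
  using point_R_iff by (cases k) auto

lemma req_old_below_point: "admissible \<xi> \<Longrightarrow> \<xi> \<in> S \<Longrightarrow> y \<in> req_old \<xi> \<Longrightarrow> (y, point \<xi> k) \<in> R"
  using point_0_le[of \<xi> k] unfolding admissible_def by (auto intro: R_trans)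

lemma block_req_old: "admissible \<xi> \<Longrightarrow> \<xi> \<in> S \<Longrightarrow> y \<in> req_old \<xi> \<Longrightarrow> block y \<noteq> \<xi>"
proof
  assume h: "admissible \<xi>" "\<xi> \<in> S" "y \<in> req_old \<xi>" "block y = \<xi>"
  then have yP: "y \<in> P" using req_old_below_point[of \<xi> y 0] R_fst_in by blast
  then have "y = point \<xi> (index y)" using point_block_index_eq h(4) by metis
  moreover have "(y, point \<xi> 0) \<in> R" using h req_old_below_point by blast
  ultimately show False using point_R_iff[OF h(2)] by (metis not_less0)
qed

lemma prescribed_below: "z \<in> P \<Longrightarrow> prescribed z \<subseteq> below z"
proof
  fix y assume z: "z \<in> P" and y: "y \<in> prescribed z"
  then have a: "active z" unfolding prescribed_def by (auto split: if_splits)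
  have S: "block z \<in> S" using z block_in by blast
  have zz: "point (block z) (index z) = z" using z point_block_index_eq by blast
  from y a consider "y \<in> req_old (block z)" | i where "i < index z" "y = point (block z) i" unfolding prescribed_def by auto
  then show "y \<in> below z"
  proof cases
    case 1 then show ?thesis using req_old_below_point[of "block z" y "index z"] a S zz unfolding active_def below_def by simp
  next
    case 2 then show ?thesis using point_R_iff[OF S, of i "index z"] zz unfolding below_def by simp
  qed
qed

lemma later_above: "w \<in> later \<beta> \<Longrightarrow> \<beta> \<in> P \<Longrightarrow> (\<beta>, w) \<in> R \<and> w \<in> P"
proof -
  assume w: "w \<in> later \<beta>" and b: "\<beta> \<in> P"
  then obtain k where k: "w = point (block \<beta>) k" "index \<beta> < k" unfolding later_def by (auto split: if_splits)
  have S: "block \<beta> \<in> S" using b block_in by blast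
  show ?thesis using point_R_iff[OF S, of "index \<beta>" k] k point_block_index_eq[OF b] point_in[OF S] by simp
qed

lemma later_not_below_eq: "w \<in> later z \<Longrightarrow> z \<in> P \<Longrightarrow> w \<notin> below_eq z"
  using later_above R_irrefl R_asym unfolding below_eq_def below_def by blast

lemma finite_emb_preimage: "finite a \<Longrightarrow> z \<in> P \<Longrightarrow> finite (emb_preimage z a)"
proof -
  assume a: "finite a" and z: "z \<in> P"
  have "inj_on (emb z) (emb_preimage z a)" using emb[OF z] by (auto simp: emb_preimage_def inj_on_def below_def)
  moreover have "emb z ` emb_preimage z a \<subseteq> a" by (auto simp: emb_preimage_def)
  ultimately show ?thesis using a by (meson finite_imageD finite_subset)
qed

lemma emb_preimage_below: "emb_preimage z a \<subseteq> below z" by (auto simp: emb_preimage_def)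

lemma unpair1_in: "unpair1 v \<eta> \<in> Om1"
proof (cases "\<exists>u\<in>Om1. v = pair (u, \<eta>)")
  case True
  then have "(SOME u. u \<in> Om1 \<and> v = pair (u, \<eta>)) \<in> Om1" by (metis (mono_tags, lifting) someI_ex)
  then show ?thesis unfolding unpair1_def using True by simp
next
  case False then show ?thesis unfolding unpair1_def using dflt_in by simp
qed

lemma unpair1_pair: "u \<in> Om1 \<Longrightarrow> \<eta> \<in> Om1 \<Longrightarrow> unpair1 (pair (u, \<eta>)) \<eta> = u"
proof -
  assume u: "u \<in> Om1" and e: "\<eta> \<in> Om1"
  have ex: "\<exists>u'. u' \<in> Om1 \<and> pair (u, \<eta>) = pair (u', \<eta>)" using u by blast
  define u' where "u' = (SOME u'. u' \<in> Om1 \<and> pair (u, \<eta>) = pair (u', \<eta>))"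
  have "u' \<in> Om1 \<and> pair (u, \<eta>) = pair (u', \<eta>)" unfolding u'_def by (rule someI_ex[OF ex])
  then have "u' = u" using pair_inj u e unfolding inj_on_def by blast
  then show ?thesis unfolding unpair1_def u'_def using u by auto
qed

lemma lr_fun_in: "\<forall>\<alpha>\<in>Om1. \<forall>\<beta>\<in>Om1. lr_fun h z \<alpha> \<beta> \<in> Om1"
  unfolding lr_fun_def using unpair1_in dflt_in by auto

lemma lr_forbidden_fin: "lr_forbidden z \<in> finsubs Om1"
  unfolding lr_forbidden_def finsubs_def using dflt_in finite_prescribed by auto

definition lr_ok :: "'p \<Rightarrow> bool" where
  "lr_ok z \<longleftrightarrow> lr_witness Om1 (lr_fun stage z) (lr_forbidden z) (lr_hull stage z) (lr_g stage z)"

lemma lr_okI: "monotone_fin Om1 (lr_hull stage z) \<Longrightarrow> lr_ok z"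
proof -
  assume m: "monotone_fin Om1 (lr_hull stage z)"
  have "\<exists>g. lr_witness Om1 (lr_fun stage z) (lr_forbidden z) (lr_hull stage z) g"
    by (rule lrcorner_principle[OF lr_fun_in lr_forbidden_fin m])
  then show ?thesis unfolding lr_ok_def lr_g_def by (rule someI_ex)
qed

lemma lr_ok_g_in: "lr_ok z \<Longrightarrow> \<beta> \<in> Om1 \<Longrightarrow> lr_g stage z \<beta> \<in> Om1"
  unfolding lr_ok_def lr_witness_def by blast
lemma lr_ok_avoids: "lr_ok z \<Longrightarrow> \<beta> \<in> Om1 \<Longrightarrow> lr_g stage z \<beta> \<notin> lr_forbidden z"
  unfolding lr_ok_def lr_witness_def by blast

lemma emb_in: "z \<in> P \<Longrightarrow> y \<in> below z \<Longrightarrow> emb z y \<in> Om1"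
  using emb unfolding below_def by blast
lemma emb_inj: "z \<in> P \<Longrightarrow> x \<in> below z \<Longrightarrow> y \<in> below z \<Longrightarrow> emb z x = emb z y \<Longrightarrow> x = y"
  using emb unfolding below_def inj_on_def by blast

lemma color_at_prescribed: "y \<in> prescribed z \<Longrightarrow> color_at z y = prescribed_color z y"
  using color_at_eq by (simp add: color_step_def)
lemma color_at_free: "y \<notin> prescribed z \<Longrightarrow> color_at z y = pair (lr_g stage z (emb z y), emb z y)"
  using color_at_eq by (simp add: color_step_def)

lemma prescribed_cases: "y \<in> prescribed z \<Longrightarrow> active z \<and> (y \<in> req_old (block z) \<or> (\<exists>i. i \<in> req_new (block z) \<and> i < index z \<and> y = point (block z) i))"
  unfolding prescribed_def by (auto split: if_splits)

lemma prescribed_color_in: "z \<in> P \<Longrightarrow> y \<in> prescribed z \<Longrightarrow> prescribed_color z y \<in> Om1"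
proof -
  assume z: "z \<in> P" and y: "y \<in> prescribed z"
  have S: "block z \<in> S" using z block_in by blast
  from prescribed_cases[OF y] have a: "active z" by blast
  then have v: "admissible (block z)" and k: "index z \<in> req_new (block z)" unfolding active_def by auto
  from prescribed_cases[OF y] consider "y \<in> req_old (block z)" | i where "i \<in> req_new (block z)" "i < index z" "y = point (block z) i" by blast
  then show ?thesis
  proof cases
    case 1 then show ?thesis using v k unfolding prescribed_color_def admissible_def by auto
  next
    case 2
    have "y \<notin> req_old (block z)" using block_req_old[OF v S] 2 block_point[OF S] by blast
    moreover have "index y = i" using 2 index_point[OF S] by simp
    ultimately show ?thesis using v k 2 unfolding prescribed_color_def admissible_def by auto
  qed
qed

lemma color_at_in: "z \<in> P \<Longrightarrow> lr_ok z \<Longrightarrow> y \<in> below z \<Longrightarrow> color_at z y \<in> Om1"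
proof (cases "y \<in> prescribed z")
  case True
  assume "z \<in> P" then show ?thesis using color_at_prescribed prescribed_color_in True by simp
next
  case False
  assume z: "z \<in> P" and L: "lr_ok z" and y: "y \<in> below z"
  then show ?thesis using color_at_free[OF False] pair_in lr_ok_g_in[OF L] emb_in[OF z y] by simp
qed

lemma lr_forbiddenI: "v \<in> prescribed_color z ` prescribed z \<Longrightarrow> u \<in> Om1 \<Longrightarrow> \<eta> \<in> Om1 \<Longrightarrow> v = pair (u, \<eta>) \<Longrightarrow> u \<in> lr_forbidden z"
proof -
  assume v: "v \<in> prescribed_color z ` prescribed z" and u: "u \<in> Om1" and e: "\<eta> \<in> Om1" and ve: "v = pair (u, \<eta>)"
  have "inv_into (Om1 \<times> Om1) pair v = (u, \<eta>)" using ve inv_into_f_f[OF pair_inj, of "(u, \<eta>)"] u e by simp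
  then show ?thesis unfolding lr_forbidden_def using v u by force
qed

text \<open>Off the prescribed points the colours at \<open>w\<close> are injective codes \<open>pair (g \<eta>, \<eta>)\<close>, and \<open>g\<close>
  avoids the first coordinates of the prescribed colours.\<close>
lemma equal_color_at_prescribed:
  assumes w: "w \<in> P" and L: "lr_ok w" and \<alpha>: "\<alpha> \<in> below w" and \<beta>: "\<beta> \<in> below w" and ne: "\<alpha> \<noteq> \<beta>"
    and eq: "color_at w \<alpha> = color_at w \<beta>"
  shows "\<alpha> \<in> prescribed w \<and> \<beta> \<in> prescribed w"
proof -
  have code: "color_at w x = pair (lr_g stage w (emb w x), emb w x)" "lr_g stage w (emb w x) \<in> Om1" "emb w x \<in> Om1"
    if "x \<in> below w" "x \<notin> prescribed w" for x
    using that color_at_free lr_ok_g_in[OF L] emb_in[OF w] by auto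
  have mixed: False if "x \<in> prescribed w" "y \<in> below w" "y \<notin> prescribed w" "color_at w x = color_at w y" for x y
  proof -
    have "prescribed_color w x = pair (lr_g stage w (emb w y), emb w y)"
      using that code color_at_prescribed by simp
    then have "lr_g stage w (emb w y) \<in> lr_forbidden w" using lr_forbiddenI code that by blast
    then show False using lr_ok_avoids[OF L] code that by blast
  qed
  have free: False if "\<alpha> \<notin> prescribed w" "\<beta> \<notin> prescribed w"
  proof -
    have "pair (lr_g stage w (emb w \<alpha>), emb w \<alpha>) = pair (lr_g stage w (emb w \<beta>), emb w \<beta>)"
      using code[OF \<alpha> that(1)] code[OF \<beta> that(2)] eq by simp
    then have "emb w \<alpha> = emb w \<beta>"
      using pair_inj code[OF \<alpha> that(1)] code[OF \<beta> that(2)] unfolding inj_on_def by blast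
    then show False using emb_inj[OF w \<alpha> \<beta>] ne by blast
  qed
  show ?thesis using free mixed \<alpha> \<beta> eq by metis
qed

lemma equal_colors_later:
  assumes ab: "(\<alpha>, \<beta>) \<in> R" and bw: "(\<beta>, w) \<in> R" and L: "lr_ok w" and eq: "col \<alpha> w = col \<beta> w"
  shows "w \<in> later \<beta>"
proof -
  have w: "w \<in> P" using bw R_snd_in by blast
  have aw: "(\<alpha>, w) \<in> R" using ab bw R_trans by blast
  have ne: "\<alpha> \<noteq> \<beta>" using ab R_irrefl by blast
  have eqG: "color_at w \<alpha> = color_at w \<beta>" using eq col_below[OF aw] col_below[OF bw] by simp
  have aP: "\<alpha> \<in> prescribed w" and bP: "\<beta> \<in> prescribed w"
    using equal_color_at_prescribed[OF w L _ _ ne eqG] aw bw unfolding below_def by auto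
  have active: "active w" using prescribed_cases[OF aP] by blast
  then have v: "admissible (block w)" and k: "index w \<in> req_new (block w)" unfolding active_def by auto
  have S: "block w \<in> S" using w block_in by blast
  have ww: "point (block w) (index w) = w" using w point_block_index_eq by blast
  have pq: "prescribed_color w \<alpha> = prescribed_color w \<beta>" using eqG color_at_prescribed aP bP by simp
  show ?thesis
  proof (cases "\<beta> \<in> req_old (block w)")
    case True
    show ?thesis
    proof (cases "\<alpha> \<in> req_old (block w)")
      case True
      then have False using pq \<open>\<beta> \<in> req_old (block w)\<close> v k ne unfolding prescribed_color_def admissible_def by auto
      then show ?thesis ..
    next
      case False
      then obtain i where i: "i \<in> req_new (block w)" "\<alpha> = point (block w) i" using prescribed_cases[OF aP] by blast
      have "(\<beta>, point (block w) 0) \<in> R" using True v unfolding admissible_def by blast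
      moreover have "point (block w) 0 = \<alpha> \<or> (point (block w) 0, \<alpha>) \<in> R" using point_0_le[OF S, of i] i by simp
      ultimately have "(\<beta>, \<alpha>) \<in> R" using R_trans by blast
      then show ?thesis using R_asym ab by blast
    qed
  next
    case False
    then obtain i where i: "i \<in> req_new (block w)" "i < index w" "\<beta> = point (block w) i"
      using prescribed_cases[OF bP] by blast
    have sb: "block \<beta> = block w" and pb: "index \<beta> = i" using i block_point[OF S] index_point[OF S] by auto
    show ?thesis unfolding later_def using sb pb i k ww v by force
  qed
qed

lemma lr_fun_agrees:
  assumes z: "z \<in> P" and L: "lr_ok z" and b: "\<beta> \<in> below z" and w: "w \<in> below z" and ne: "w \<noteq> \<beta>"
    and nP: "w \<notin> prescribed z" and eq: "col \<beta> w = col z w"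
  shows "emb z w \<in> {\<eta>\<in>Om1. lr_fun stage z (emb z \<beta>) \<eta> = lr_g stage z \<eta>}"
proof -
  have ew: "emb z w \<in> Om1" and eb: "emb z \<beta> \<in> Om1" using emb_in[OF z] b w by auto
  have gw: "lr_g stage z (emb z w) \<in> Om1" using lr_ok_g_in[OF L ew] .
  have "col z w = color_at z w" using col_above w unfolding below_def by blast
  then have c1: "col \<beta> w = pair (lr_g stage z (emb z w), emb z w)" using eq color_at_free[OF nP] by simp
  have injz: "inj_on (emb z) (below z)" using emb[OF z] unfolding below_def by blast
  have neq: "emb z \<beta> \<noteq> emb z w" using emb_inj[OF z b w] ne by metis
  have i1: "inv_into (below z) (emb z) (emb z \<beta>) = \<beta>" using inv_into_f_f[OF injz b] .
  have i2: "inv_into (below z) (emb z) (emb z w) = w" using inv_into_f_f[OF injz w] .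
  have "lr_fun stage z (emb z \<beta>) (emb z w) = unpair1 (col \<beta> w) (emb z w)"
    unfolding lr_fun_def i1 i2 col_def using neq b w by simp
  also have "\<dots> = lr_g stage z (emb z w)" using c1 unpair1_pair[OF gw ew] by simp
  finally show ?thesis using ew by simp
qed

lemma Aset_coloring: "Aset coloring P \<alpha> \<beta> = {w \<in> P - {\<alpha>, \<beta>}. col \<alpha> w = col \<beta> w}" if "\<alpha> \<in> P" "\<beta> \<in> P"
  unfolding Aset_def using coloring_pair that by auto

lemma later_trans: "y \<in> later x \<Longrightarrow> x \<in> P \<Longrightarrow> later y \<subseteq> later x"
proof
  fix w assume y: "y \<in> later x" and x: "x \<in> P" and w: "w \<in> later y"
  have S: "block x \<in> S" using x block_in by blast
  from y obtain k where k: "admissible (block x)" "k \<in> req_new (block x)" "index x < k" "y = point (block x) k"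
    unfolding later_def by (auto split: if_splits)
  have sy: "block y = block x" "index y = k" using k block_point[OF S] index_point[OF S] by auto
  from w obtain l where "l \<in> req_new (block y)" "index y < l" "w = point (block y) l" unfolding later_def by (auto split: if_splits)
  then show "w \<in> later x" unfolding later_def using sy k by auto
qed

lemma later_between:
  assumes w: "w \<in> later \<beta>" and b: "\<beta> \<in> P" and y: "y \<in> P" and by1: "\<beta> = y \<or> (\<beta>, y) \<in> R" and yw: "(y, w) \<in> R"
  shows "w \<in> later y"
proof -
  have S: "block \<beta> \<in> S" using b block_in by blast
  from w obtain k where k: "admissible (block \<beta>)" "k \<in> req_new (block \<beta>)" "index \<beta> < k" "w = point (block \<beta>) k"
    unfolding later_def by (auto split: if_splits)
  have bb: "point (block \<beta>) (index \<beta>) = \<beta>" using b point_block_index_eq by blast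
  have sy: "block y = block \<beta>"
  proof (cases "\<beta> = y")
    case True then show ?thesis by simp
  next
    case False then have "(\<beta>, y) \<in> R" using by1 by blast
    then show ?thesis using block_convex[OF S, of "index \<beta>" y k] bb yw k by simp
  qed
  have yy: "point (block \<beta>) (index y) = y" using y point_block_index_eq sy by metis
  have "index y < k" using point_R_iff[OF S, of "index y" k] yw yy k by simp
  then show ?thesis unfolding later_def using sy k by auto
qed

lemma lr_ok_cover: "lr_ok z \<Longrightarrow> A \<in> finsubs Om1 \<Longrightarrow> \<exists>b. A \<subseteq> b \<and> lr_closed (lr_fun stage z) (lr_hull stage z) (lr_g stage z) b"
proof -
  assume L: "lr_ok z" and A: "A \<in> finsubs Om1"
  have "\<forall>a\<in>finsubs Om1. \<exists>b\<in>finsubs Om1. a \<subseteq> b \<and>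
             (\<forall>\<alpha>\<in>lr_hull stage z b. {\<beta>\<in>Om1. lr_fun stage z \<alpha> \<beta> = lr_g stage z \<beta>} \<subseteq> lr_hull stage z b)"
    using L unfolding lr_ok_def lr_witness_def by (elim conjE)
  then obtain b where "b \<in> finsubs Om1" "A \<subseteq> b"
      "\<forall>\<alpha>\<in>lr_hull stage z b. {\<beta>\<in>Om1. lr_fun stage z \<alpha> \<beta> = lr_g stage z \<beta>} \<subseteq> lr_hull stage z b"
    using A by meson
  then show ?thesis unfolding lr_closed_def by blast
qed

lemma saturate_subset: "a \<subseteq> saturate B a"
  unfolding saturate_def by blast

lemma finite_saturate: "finite a \<Longrightarrow> finite (saturate B a)"
  unfolding saturate_def using finite_later by auto

lemma saturate_later_closed:
  assumes a: "a \<subseteq> P" and x: "x \<in> saturate B a"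
  shows "later x \<inter> B \<subseteq> saturate B a"
proof
  fix w assume w: "w \<in> later x \<inter> B"
  show "w \<in> saturate B a"
  proof (cases "x \<in> a")
    case True then show ?thesis using w unfolding saturate_def by blast
  next
    case False
    then obtain x0 where x0: "x0 \<in> a" "x \<in> later x0" using x unfolding saturate_def by blast
    have "w \<in> later x0" using later_trans[OF x0(2)] x0(1) a w by blast
    then show ?thesis using x0(1) w unfolding saturate_def by blast
  qed
qed

definition later_closed :: "'p \<Rightarrow> 'p set \<Rightarrow> bool" where
  "later_closed y A \<longleftrightarrow> (\<forall>\<beta>\<in>A. later \<beta> \<inter> below_eq y \<subseteq> A)"

definition A_closed :: "'p \<Rightarrow> 'p set \<Rightarrow> bool" where
  "A_closed y A \<longleftrightarrow> (\<forall>\<alpha>\<in>A. \<forall>\<beta>\<in>A. \<alpha> \<noteq> \<beta> \<longrightarrow> Aset coloring P \<alpha> \<beta> \<inter> below_eq y \<subseteq> A)"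

definition hull_ok :: "'p \<Rightarrow> bool" where
  "hull_ok y \<longleftrightarrow> (\<forall>a. finite a \<and> y \<in> a \<and> a \<subseteq> below_eq y \<longrightarrow>
     finite (hull_at y a) \<and> a \<subseteq> hull_at y a \<and> hull_at y a \<subseteq> below_eq y \<and>
     later_closed y (hull_at y a) \<and> A_closed y (hull_at y a))"

lemma hull_from_props:
  assumes b: "finite b" "b \<noteq> {}" "b \<subseteq> P" and ok: "hull_ok (R_max b)"
  shows "finite (hull_from stage b) \<and> b \<subseteq> hull_from stage b \<and> hull_from stage b \<subseteq> below_eq (R_max b) \<and>
    later_closed (R_max b) (hull_from stage b) \<and> A_closed (R_max b) (hull_from stage b)"
proof -
  have y: "R_max b \<in> b" "b \<subseteq> below_eq (R_max b)" using R_max_greatest[OF b] by auto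
  then have "hull_from stage b = hull_at (R_max b) b"
    unfolding hull_from_def hull_at_def using b(2) by simp
  moreover have "finite (hull_at (R_max b) b) \<and> b \<subseteq> hull_at (R_max b) b \<and>
    hull_at (R_max b) b \<subseteq> below_eq (R_max b) \<and> later_closed (R_max b) (hull_at (R_max b) b) \<and>
    A_closed (R_max b) (hull_at (R_max b) b)"
    using ok y b(1) unfolding hull_ok_def by blast
  ultimately show ?thesis by simp
qed

lemma hull_from_bounds:
  assumes z: "z \<in> P" and ok: "\<And>y. y \<in> below z \<Longrightarrow> hull_ok y" and b: "finite b" "b \<subseteq> below z"
  shows "finite (hull_from stage b) \<and> b \<subseteq> hull_from stage b \<and> hull_from stage b \<subseteq> below z"
proof (cases "b = {}")
  case True then show ?thesis by (simp add: hull_from_def)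
next
  case False
  have bP: "b \<subseteq> P" using b below_subset by blast
  have y: "R_max b \<in> below z" using R_max_greatest[OF b(1) False bP] b(2) by blast
  then have "below_eq (R_max b) \<subseteq> below z" unfolding below_eq_def below_def by (auto intro: R_trans)
  then show ?thesis using hull_from_props[OF b(1) False bP ok[OF y]] by blast
qed

lemma hull_from_escape:
  assumes b: "finite b" "b \<noteq> {}" "b \<subseteq> P" and ok: "hull_ok (R_max b)"
    and \<alpha>: "\<alpha> \<in> hull_from stage b" and \<beta>: "\<beta> \<in> hull_from stage b" and ne: "\<alpha> \<noteq> \<beta>"
    and w: "w \<in> Aset coloring P \<alpha> \<beta>" and lw: "lr_ok w"
  shows "w \<in> hull_from stage b \<or> w \<in> later (R_max b)"
proof -
  let ?y = "R_max b" and ?H = "hull_from stage b"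
  have H: "?H \<subseteq> below_eq ?y" "A_closed ?y ?H" using hull_from_props[OF b ok] by blast+
  have yP: "?y \<in> P" using R_max_greatest[OF b] b(3) by blast
  have \<alpha>P: "\<alpha> \<in> P" and \<beta>P: "\<beta> \<in> P" using \<alpha> \<beta> H(1) below_eq_subset[OF yP] by blast+
  show ?thesis
  proof (cases "w \<in> below_eq ?y")
    case True then show ?thesis using H(2) \<alpha> \<beta> ne w unfolding A_closed_def by blast
  next
    case False
    have wP: "w \<in> P" and eq: "col \<alpha> w = col \<beta> w" using w Aset_coloring[OF \<alpha>P \<beta>P] by auto
    have yw: "(?y, w) \<in> R" using totR[OF yP wP] False unfolding below_eq_def below_def by blast
    have escape: "w \<in> later ?y"
      if x: "x \<in> ?H" and x': "x' \<in> ?H" and xx': "(x, x') \<in> R" and e: "col x w = col x' w" for x x'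
    proof -
      have x'P: "x' \<in> P" using x' H(1) below_eq_subset[OF yP] by blast
      have x'y: "x' = ?y \<or> (x', ?y) \<in> R" using x' H(1) unfolding below_eq_def below_def by blast
      then have "(x', w) \<in> R" using yw R_trans by blast
      then have "w \<in> later x'" using equal_colors_later[OF xx' _ lw e] by blast
      then show ?thesis using later_between[OF _ x'P yP x'y yw] by blast
    qed
    consider "(\<alpha>, \<beta>) \<in> R" | "(\<beta>, \<alpha>) \<in> R" using totR[OF \<alpha>P \<beta>P ne] by blast
    then show ?thesis using escape \<alpha> \<beta> eq by cases auto
  qed
qed

lemma hull_below_bounds:
  assumes z: "z \<in> P" and ok: "\<And>y. y \<in> below z \<Longrightarrow> hull_ok y" and b: "finite b" "b \<subseteq> below z"
  shows "finite (hull_below stage z b) \<and> b \<subseteq> hull_below stage z b \<and> hull_below stage z b \<subseteq> below z"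
proof -
  have "finite (saturate (below z) b)" "saturate (below z) b \<subseteq> below z"
    using finite_saturate[OF b(1)] b(2) unfolding saturate_def by auto
  then have "finite (hull_from stage (saturate (below z) b)) \<and>
      saturate (below z) b \<subseteq> hull_from stage (saturate (below z) b) \<and>
      hull_from stage (saturate (below z) b) \<subseteq> below z"
    using hull_from_bounds[OF z ok] by blast
  then show ?thesis using saturate_subset[of b "below z"] unfolding hull_below_def by blast
qed

lemma hull_below_R_max:
  assumes z: "z \<in> P" and b: "finite b" "b \<subseteq> below z" and ne: "hull_below stage z b \<noteq> {}"
  defines "y \<equiv> R_max (saturate (below z) b)"
  shows "saturate (below z) b \<noteq> {}" "saturate (below z) b \<subseteq> P"
    and "y \<in> saturate (below z) b" "saturate (below z) b \<subseteq> below_eq y" "y \<in> below z"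
proof -
  show sne: "saturate (below z) b \<noteq> {}" using ne unfolding hull_below_def hull_from_def by auto
  have sb: "saturate (below z) b \<subseteq> below z" using b(2) unfolding saturate_def by blast
  then show sP: "saturate (below z) b \<subseteq> P" using below_subset by blast
  show "y \<in> saturate (below z) b" "saturate (below z) b \<subseteq> below_eq y"
    using R_max_greatest[OF finite_saturate[OF b(1)] sne sP] unfolding y_def by auto
  then show "y \<in> below z" using sb by blast
qed

lemma hull_below_later_closed:
  assumes z: "z \<in> P" and ok: "\<And>y. y \<in> below z \<Longrightarrow> hull_ok y" and b: "finite b" "b \<subseteq> below z"
    and \<beta>: "\<beta> \<in> hull_below stage z b" and w: "w \<in> later \<beta>" "w \<in> below z"
  shows "w \<in> hull_below stage z b"
proof -
  let ?s = "saturate (below z) b"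
  let ?y = "R_max ?s"
  have ne: "hull_below stage z b \<noteq> {}" using \<beta> by blast
  note s = hull_below_R_max[OF z b ne]
  have yP: "?y \<in> P" using s(5) below_subset by blast
  have H: "hull_below stage z b \<subseteq> below_eq ?y" "later_closed ?y (hull_below stage z b)"
    using hull_from_props[OF finite_saturate[OF b(1)] s(1,2) ok[OF s(5)]] unfolding hull_below_def by blast+
  show ?thesis
  proof (cases "w \<in> below_eq ?y")
    case True then show ?thesis using H(2) \<beta> w(1) unfolding later_closed_def by blast
  next
    case False
    have \<beta>P: "\<beta> \<in> P" using \<beta> H(1) below_eq_subset[OF yP] by blast
    have \<beta>y: "\<beta> = ?y \<or> (\<beta>, ?y) \<in> R" using \<beta> H(1) unfolding below_eq_def below_def by blast
    have wP: "w \<in> P" using w(2) below_subset by blast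
    have "(?y, w) \<in> R" using totR[OF yP wP] False unfolding below_eq_def below_def by blast
    then have "w \<in> later ?y" using later_between[OF w(1) \<beta>P yP \<beta>y] by blast
    then have "w \<in> ?s" using saturate_later_closed[OF s(2)[THEN subset_trans[OF saturate_subset]] s(3)] w(2)
      by blast
    then show ?thesis using s(4) False by blast
  qed
qed

lemma hull_below_A_closed:
  assumes z: "z \<in> P" and ok: "\<And>y. y \<in> below z \<Longrightarrow> lr_ok y \<and> hull_ok y" and b: "finite b" "b \<subseteq> below z"
    and \<alpha>: "\<alpha> \<in> hull_below stage z b" and \<beta>: "\<beta> \<in> hull_below stage z b" and ne: "\<alpha> \<noteq> \<beta>"
    and w: "w \<in> Aset coloring P \<alpha> \<beta>" "w \<in> below z"
  shows "w \<in> hull_below stage z b"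
proof -
  let ?s = "saturate (below z) b"
  have nonempty: "hull_below stage z b \<noteq> {}" using \<alpha> by blast
  note s = hull_below_R_max[OF z b nonempty]
  have "w \<in> hull_from stage ?s \<or> w \<in> later (R_max ?s)"
    using hull_from_escape[OF finite_saturate[OF b(1)] s(1,2)] ok[OF s(5)] ok[OF w(2)] \<alpha> \<beta> ne w(1)
    unfolding hull_below_def by blast
  moreover have "later (R_max ?s) \<inter> below z \<subseteq> ?s"
    using saturate_later_closed[OF s(2)[THEN subset_trans[OF saturate_subset]] s(3)] .
  moreover have "?s \<subseteq> hull_below stage z b"
    using hull_from_props[OF finite_saturate[OF b(1)] s(1,2)] ok[OF s(5)] unfolding hull_below_def by blast
  ultimately show ?thesis using w(2) unfolding hull_below_def by blast
qed

lemma lr_hull_monotone: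
  assumes z: "z \<in> P" and ok: "\<And>y. y \<in> below z \<Longrightarrow> hull_ok y"
  shows "monotone_fin Om1 (lr_hull stage z)"
  unfolding monotone_fin_def
proof
  fix a assume a: "a \<in> finsubs Om1"
  have "finite (emb_preimage z a)" using finite_emb_preimage[OF _ z] a by (auto simp: finsubs_def)
  then have H: "finite (hull_below stage z (emb_preimage z a))" "hull_below stage z (emb_preimage z a) \<subseteq> below z"
    using hull_below_bounds[OF z ok _ emb_preimage_below] by blast+
  then have "emb z ` hull_below stage z (emb_preimage z a) \<in> finsubs Om1"
    using emb_in[OF z] unfolding finsubs_def by blast
  then show "lr_hull stage z a \<in> finsubs Om1 \<and> a \<subseteq> lr_hull stage z a"
    using a unfolding lr_hull_def finsubs_def by auto
qed

lemma lr_cover: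
  assumes z: "z \<in> P" and L: "lr_ok z" and a0: "finite a0" "a0 \<subseteq> below z"
  obtains B where "lr_cover stage z a0 = emb_preimage z B" "emb z ` a0 \<subseteq> B" "finite B"
    "\<And>\<alpha>. \<alpha> \<in> lr_hull stage z B \<Longrightarrow> {\<beta>\<in>Om1. lr_fun stage z \<alpha> \<beta> = lr_g stage z \<beta>} \<subseteq> lr_hull stage z B"
proof -
  define B where "B = (SOME B. emb z ` a0 \<subseteq> B \<and> lr_closed (lr_fun stage z) (lr_hull stage z) (lr_g stage z) B)"
  have "emb z ` a0 \<in> finsubs Om1" using a0 emb_in[OF z] unfolding finsubs_def by auto
  then have "\<exists>B. emb z ` a0 \<subseteq> B \<and> lr_closed (lr_fun stage z) (lr_hull stage z) (lr_g stage z) B"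
    by (rule lr_ok_cover[OF L])
  then have B: "emb z ` a0 \<subseteq> B \<and> lr_closed (lr_fun stage z) (lr_hull stage z) (lr_g stage z) B"
    unfolding B_def by (rule someI_ex)
  have "lr_cover stage z a0 = emb_preimage z B" unfolding lr_cover_def B_def ..
  moreover have "finite B" using B unfolding lr_closed_def finsubs_def by blast
  moreover have "{\<beta>\<in>Om1. lr_fun stage z \<alpha> \<beta> = lr_g stage z \<beta>} \<subseteq> lr_hull stage z B"
    if "\<alpha> \<in> lr_hull stage z B" for \<alpha>
    using B that unfolding lr_closed_def by blast
  ultimately show ?thesis using B that by blast
qed

lemma lr_cover_bounds:
  assumes z: "z \<in> P" and L: "lr_ok z" and a0: "finite a0" "a0 \<subseteq> below z"
  shows "finite (lr_cover stage z a0) \<and> a0 \<subseteq> lr_cover stage z a0 \<and> lr_cover stage z a0 \<subseteq> below z"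
proof -
  obtain B where B: "lr_cover stage z a0 = emb_preimage z B" "emb z ` a0 \<subseteq> B" "finite B"
    by (rule lr_cover[OF z L a0]) (rule that; assumption)
  have "a0 \<subseteq> emb_preimage z B" using B(2) a0(2) unfolding emb_preimage_def by blast
  then show ?thesis unfolding B(1) using finite_emb_preimage[OF B(3) z] emb_preimage_below[of z B] by blast
qed

text \<open>Pairs involving \<open>z\<close> itself: the colours at \<open>z\<close> of unprescribed points encode the witness
  \<open>g\<close> of the principle, whose closure property is exactly what is needed here.\<close>
lemma hull_below_cover_closed:
  assumes z: "z \<in> P" and ok: "\<And>y. y \<in> below z \<Longrightarrow> hull_ok y" and L: "lr_ok z"
    and a0: "finite a0" "a0 \<subseteq> below z" "prescribed z \<subseteq> a0"
    and \<beta>: "\<beta> \<in> hull_below stage z (lr_cover stage z a0)"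
    and w: "w \<in> below z" "w \<noteq> \<beta>" "col \<beta> w = col z w"
  shows "w \<in> hull_below stage z (lr_cover stage z a0)"
proof -
  let ?H = "hull_below stage z (lr_cover stage z a0)"
  obtain B where B: "lr_cover stage z a0 = emb_preimage z B" "emb z ` a0 \<subseteq> B" "finite B"
    and closed: "\<And>\<alpha>. \<alpha> \<in> lr_hull stage z B \<Longrightarrow> {\<eta>\<in>Om1. lr_fun stage z \<alpha> \<eta> = lr_g stage z \<eta>} \<subseteq> lr_hull stage z B"
    by (rule lr_cover[OF z L a0(1,2)]) (rule that; assumption)
  have cover: "finite (lr_cover stage z a0)" "a0 \<subseteq> lr_cover stage z a0" "lr_cover stage z a0 \<subseteq> below z"
    using lr_cover_bounds[OF z L a0(1,2)] by blast+
  have H: "lr_cover stage z a0 \<subseteq> ?H" "?H \<subseteq> below z"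
    using hull_below_bounds[OF z ok cover(1,3)] by blast+
  have hB: "lr_hull stage z B = B \<union> emb z ` ?H" unfolding lr_hull_def B(1) ..
  show ?thesis
  proof (cases "w \<in> prescribed z")
    case True then show ?thesis using a0(3) cover(2) H(1) by blast
  next
    case False
    have "emb z w \<in> {\<eta>\<in>Om1. lr_fun stage z (emb z \<beta>) \<eta> = lr_g stage z \<eta>}"
      using lr_fun_agrees[OF z L _ w(1,2) False w(3)] \<beta> H(2) by blast
    moreover have "emb z \<beta> \<in> lr_hull stage z B" using hB \<beta> by blast
    ultimately have "emb z w \<in> B \<union> emb z ` ?H" using closed hB by blast
    then show ?thesis
    proof
      assume "emb z w \<in> B"
      then show ?thesis using w(1) H(1) unfolding B(1) emb_preimage_def by blast
    next
      assume "emb z w \<in> emb z ` ?H"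
      then show ?thesis using emb_inj[OF z w(1)] H(2) by blast
    qed
  qed
qed

lemma hull_step_later_closed:
  assumes z: "z \<in> P" and ok: "\<And>y. y \<in> below z \<Longrightarrow> hull_ok y" and L: "lr_ok z"
    and a0: "finite a0" "a0 \<subseteq> below z"
  shows "later_closed z (insert z (hull_below stage z (lr_cover stage z a0)))"
  unfolding later_closed_def
proof (intro ballI subsetI)
  let ?H = "hull_below stage z (lr_cover stage z a0)"
  have cover: "finite (lr_cover stage z a0)" "lr_cover stage z a0 \<subseteq> below z"
    using lr_cover_bounds[OF z L a0] by blast+
  fix \<beta> w assume \<beta>: "\<beta> \<in> insert z ?H" and w: "w \<in> later \<beta> \<inter> below_eq z"
  have "\<beta> \<in> ?H" using \<beta> w later_not_below_eq[OF _ z] by blast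
  then show "w \<in> insert z ?H"
    using hull_below_later_closed[OF z ok cover, of \<beta> w] w unfolding below_eq_def by blast
qed

lemma hull_step_A_closed:
  assumes z: "z \<in> P" and ok: "\<And>y. y \<in> below z \<Longrightarrow> lr_ok y \<and> hull_ok y" and L: "lr_ok z"
    and a0: "finite a0" "a0 \<subseteq> below z" "prescribed z \<subseteq> a0"
  shows "A_closed z (insert z (hull_below stage z (lr_cover stage z a0)))"
  unfolding A_closed_def
proof (intro ballI impI subsetI)
  let ?H = "hull_below stage z (lr_cover stage z a0)"
  have okH: "\<And>y. y \<in> below z \<Longrightarrow> hull_ok y" using ok by blast
  have cover: "finite (lr_cover stage z a0)" "lr_cover stage z a0 \<subseteq> below z"
    using lr_cover_bounds[OF z L a0(1,2)] by blast+
  have HP: "insert z ?H \<subseteq> P" using hull_below_bounds[OF z okH cover] z below_subset by blast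
  fix \<alpha> \<beta> w assume \<alpha>: "\<alpha> \<in> insert z ?H" and \<beta>: "\<beta> \<in> insert z ?H" and ne: "\<alpha> \<noteq> \<beta>"
    and w: "w \<in> Aset coloring P \<alpha> \<beta> \<inter> below_eq z"
  have \<alpha>P: "\<alpha> \<in> P" and \<beta>P: "\<beta> \<in> P" using \<alpha> \<beta> HP by blast+
  have w': "w \<noteq> \<alpha>" "w \<noteq> \<beta>" "col \<alpha> w = col \<beta> w" using w Aset_coloring[OF \<alpha>P \<beta>P] by auto
  show "w \<in> insert z ?H"
  proof (cases "w = z")
    case False
    then have wz: "w \<in> below z" using w unfolding below_eq_def by blast
    have new: "w \<in> ?H" if "x \<in> ?H" "w \<noteq> x" "col x w = col z w" for x
      using hull_below_cover_closed[OF z okH L a0 _ wz] that by blast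
    consider "\<alpha> = z" | "\<beta> = z" | "\<alpha> \<in> ?H" "\<beta> \<in> ?H" using \<alpha> \<beta> by blast
    then show ?thesis
    proof cases
      case 1 then show ?thesis using new[of \<beta>] \<beta> ne w' by simp
    next
      case 2 then show ?thesis using new[of \<alpha>] \<alpha> ne w' by simp
    next
      case 3 then show ?thesis using hull_below_A_closed[OF z ok cover _ _ ne _ wz] w by blast
    qed
  qed simp
qed

lemma hull_ok_step:
  assumes z: "z \<in> P" and ok: "\<And>y. y \<in> below z \<Longrightarrow> lr_ok y \<and> hull_ok y" and L: "lr_ok z"
  shows "hull_ok z"
  unfolding hull_ok_def
proof (intro allI impI)
  fix a assume a: "finite a \<and> z \<in> a \<and> a \<subseteq> below_eq z"
  define a0 where "a0 = (a - {z}) \<union> prescribed z"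
  define H where "H = hull_below stage z (lr_cover stage z a0)"
  have okH: "\<And>y. y \<in> below z \<Longrightarrow> hull_ok y" using ok by blast
  have a0: "finite a0" "a0 \<subseteq> below z" "prescribed z \<subseteq> a0"
    using a finite_prescribed prescribed_below[OF z] unfolding a0_def below_eq_def by auto
  have hull_z: "hull_at z a = insert z H" unfolding hull_at_eq hull_step_def a0_def H_def ..
  have cover: "finite (lr_cover stage z a0)" "a0 \<subseteq> lr_cover stage z a0" "lr_cover stage z a0 \<subseteq> below z"
    using lr_cover_bounds[OF z L a0(1,2)] by blast+
  have H: "finite H" "lr_cover stage z a0 \<subseteq> H" "H \<subseteq> below z"
    using hull_below_bounds[OF z okH cover(1,3)] unfolding H_def by blast+
  have "a \<subseteq> insert z H" using a cover(2) H(2) unfolding a0_def by blast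
  moreover have "insert z H \<subseteq> below_eq z" using H(3) unfolding below_eq_def by blast
  ultimately show "finite (hull_at z a) \<and> a \<subseteq> hull_at z a \<and> hull_at z a \<subseteq> below_eq z \<and>
      later_closed z (hull_at z a) \<and> A_closed z (hull_at z a)"
    using H(1) hull_step_later_closed[OF z okH L a0(1,2)] hull_step_A_closed[OF z ok L a0]
    unfolding hull_z H_def by blast
qed

lemma stage_ok: "z \<in> P \<Longrightarrow> lr_ok z \<and> hull_ok z"
proof (induction z rule: wf_induct[OF wfR])
  case (1 z)
  have ok: "\<And>y. y \<in> below z \<Longrightarrow> lr_ok y \<and> hull_ok y" using 1 R_fst_in unfolding below_def by blast
  have "lr_ok z" using lr_okI[OF lr_hull_monotone[OF 1(2)]] ok by blast
  then show ?case using hull_ok_step[OF 1(2) ok] by blast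
qed

section \<open>The colouring, the closure operator and realization of requirements\<close>

definition hull :: "'p set \<Rightarrow> 'p set" where
  "hull a = hull_from stage (saturate P a)"

definition target :: "'p \<Rightarrow> 'p" where
  "target z = (if active z then req_val (block z) (Inr (index z)) else (SOME x. x \<in> P))"

lemma coloring_in:
  assumes x: "x \<in> P" and y: "y \<in> P" and ne: "x \<noteq> y"
  shows "coloring {x, y} \<in> Om1"
proof -
  consider "(x, y) \<in> R" | "(y, x) \<in> R" using totR[OF x y ne] by blast
  then show ?thesis
  proof cases
    case 1 then show ?thesis
      using coloring_pair[OF x y ne] col_below color_at_in[OF y] stage_ok[OF y] unfolding below_def by simp
  next
    case 2 then show ?thesis
      using coloring_pair[OF x y ne] col_above color_at_in[OF x] stage_ok[OF x] unfolding below_def by simp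
  qed
qed

lemma coloring_pairs_in: "p \<in> pairs P \<Longrightarrow> coloring p \<in> Om1"
  unfolding pairs_def using coloring_in by blast

lemma target_in:
  assumes "\<alpha> \<in> P" shows "target \<alpha> \<in> P"
proof (cases "active \<alpha>")
  case True
  then have "req_val (block \<alpha>) (Inr (index \<alpha>)) \<in> P" unfolding active_def admissible_def by blast
  then show ?thesis unfolding target_def using True by simp
next
  case False then show ?thesis unfolding target_def using assms someI[of "\<lambda>x. x \<in> P" \<alpha>] by simp
qed

lemma hull_props:
  assumes a: "a \<in> finsubs P" and ne: "a \<noteq> {}"
  shows "finite (hull a) \<and> a \<subseteq> hull a \<and> hull a \<subseteq> P"
proof -
  have s: "finite (saturate P a)" "saturate P a \<noteq> {}" "saturate P a \<subseteq> P"
    using a ne finite_saturate saturate_subset[of a P] unfolding finsubs_def saturate_def by auto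
  have yP: "R_max (saturate P a) \<in> P" using R_max_greatest[OF s] s(3) by blast
  show ?thesis using hull_from_props[OF s] stage_ok[OF yP] below_eq_subset[OF yP] saturate_subset[of a P]
    unfolding hull_def by blast
qed

lemma monotone_hull: "monotone_fin P hull"
  unfolding monotone_fin_def
proof
  fix a assume a: "a \<in> finsubs P"
  show "hull a \<in> finsubs P \<and> a \<subseteq> hull a"
  proof (cases "a = {}")
    case True then show ?thesis unfolding hull_def hull_from_def saturate_def finsubs_def by simp
  next
    case False then show ?thesis using hull_props[OF a] unfolding finsubs_def by blast
  qed
qed

lemma hull_A_closed:
  assumes a: "a \<in> finsubs P" and \<alpha>: "\<alpha> \<in> hull a" and \<beta>: "\<beta> \<in> hull a" and ne: "\<alpha> \<noteq> \<beta>"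
  shows "Aset coloring P \<alpha> \<beta> \<subseteq> hull a"
proof
  fix w assume w: "w \<in> Aset coloring P \<alpha> \<beta>"
  have s: "finite (saturate P a)" "saturate P a \<noteq> {}" "saturate P a \<subseteq> P"
    using a \<alpha> finite_saturate unfolding finsubs_def hull_def hull_from_def saturate_def by auto
  let ?y = "R_max (saturate P a)"
  have yP: "?y \<in> P" "?y \<in> saturate P a" using R_max_greatest[OF s] s(3) by blast+
  have wP: "w \<in> P" using w unfolding Aset_def by blast
  have "w \<in> hull a \<or> w \<in> later ?y"
    using hull_from_escape[OF s _ _ _ ne w] stage_ok[OF yP(1)] stage_ok[OF wP] \<alpha> \<beta> unfolding hull_def by blast
  moreover have "later ?y \<inter> P \<subseteq> hull a"
    using saturate_later_closed[OF _ yP(2)] hull_from_props[OF s] stage_ok[OF yP(1)] a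
    unfolding hull_def finsubs_def by blast
  ultimately show "w \<in> hull a" using wP by blast
qed

lemma color_at_point:
  assumes S: "\<xi> \<in> S" and v: "admissible \<xi>" and k: "k \<in> req_new \<xi>"
  shows "active (point \<xi> k)"
    and "\<alpha> \<in> req_old \<xi> \<Longrightarrow> color_at (point \<xi> k) \<alpha> = req_color \<xi> {Inl \<alpha>, Inr k}"
    and "i \<in> req_new \<xi> \<Longrightarrow> i < k \<Longrightarrow> color_at (point \<xi> k) (point \<xi> i) = req_color \<xi> {Inr i, Inr k}"
proof -
  have sp: "block (point \<xi> k) = \<xi>" "index (point \<xi> k) = k" using block_point[OF S] index_point[OF S] by auto
  show A: "active (point \<xi> k)" unfolding active_def sp using v k by simp
  have P: "point \<xi> k \<in> P" using point_in[OF S] .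
  show "color_at (point \<xi> k) \<alpha> = req_color \<xi> {Inl \<alpha>, Inr k}" if a: "\<alpha> \<in> req_old \<xi>"
  proof -
    have "\<alpha> \<in> prescribed (point \<xi> k)" unfolding prescribed_def using A sp a by simp
    then show ?thesis using color_at_prescribed a sp unfolding prescribed_color_def by simp
  qed
  show "color_at (point \<xi> k) (point \<xi> i) = req_color \<xi> {Inr i, Inr k}" if i: "i \<in> req_new \<xi>" "i < k"
  proof -
    have "point \<xi> i \<in> prescribed (point \<xi> k)" unfolding prescribed_def using A sp i by auto
    moreover have "point \<xi> i \<notin> req_old \<xi>" using block_req_old[OF v S] block_point[OF S] by blast
    ultimately show ?thesis using color_at_prescribed sp index_point[OF S] unfolding prescribed_color_def by simp
  qed
qed

definition embed :: "'s \<Rightarrow> 'p + nat \<Rightarrow> 'p" where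
  "embed \<xi> = case_sum (\<lambda>\<alpha>. \<alpha>) (point \<xi>)"

lemma req_domE:
  assumes "x \<in> req_dom \<xi>"
  obtains \<alpha> where "x = Inl \<alpha>" "\<alpha> \<in> req_old \<xi>" | k where "x = Inr k" "k \<in> req_new \<xi>"
  using assms by (cases x) (auto simp: req_old_def req_new_def)

lemma embed_in:
  assumes S: "\<xi> \<in> S" and v: "admissible \<xi>" and x: "x \<in> req_dom \<xi>"
  shows "embed \<xi> x \<in> P"
  using x
proof (cases rule: req_domE)
  case (1 \<alpha>) then show ?thesis using req_old_below_point[OF v S, of \<alpha> 0] R_fst_in by (simp add: embed_def)
next
  case (2 k) then show ?thesis using point_in[OF S] by (simp add: embed_def)
qed

lemma inj_on_embed:
  assumes S: "\<xi> \<in> S" and v: "admissible \<xi>"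
  shows "inj_on (embed \<xi>) (req_dom \<xi>)"
proof (rule inj_onI)
  fix x y assume x: "x \<in> req_dom \<xi>" and y: "y \<in> req_dom \<xi>" and eq: "embed \<xi> x = embed \<xi> y"
  have old_new: "\<alpha> \<noteq> point \<xi> k" if "\<alpha> \<in> req_old \<xi>" for \<alpha> k
    using req_old_below_point[OF v S that] R_irrefl by blast
  have new_new: "k = l" if "point \<xi> k = point \<xi> l" for k l
    using that index_point[OF S, of k] index_point[OF S, of l] by metis
  from x y show "x = y"
    by (cases rule: req_domE; cases rule: req_domE[OF y]) (use eq old_new new_new in \<open>auto simp: embed_def\<close>)
qed

lemma embed_color:
  assumes S: "\<xi> \<in> S" and v: "admissible \<xi>" and k: "Inr k \<in> req_dom \<xi>"
    and y: "y \<in> req_dom \<xi>" and ne: "y \<noteq> Inr k"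
  shows "coloring {embed \<xi> y, point \<xi> k} = req_color \<xi> {y, Inr k}"
  using y
proof (cases rule: req_domE)
  case (1 \<alpha>)
  have R: "(\<alpha>, point \<xi> k) \<in> R" using req_old_below_point[OF v S 1(2)] .
  have "\<alpha> \<noteq> point \<xi> k" using R R_irrefl by blast
  then have "coloring {\<alpha>, point \<xi> k} = color_at (point \<xi> k) \<alpha>"
    using coloring_pair[OF R_fst_in[OF R] point_in[OF S]] col_below[OF R] by simp
  then show ?thesis using color_at_point(2)[OF S v _ 1(2)] k 1(1) by (simp add: embed_def req_new_def)
next
  case (2 i)
  have kN: "k \<in> req_new \<xi>" using k by (simp add: req_new_def)
  have "i \<noteq> k" using ne 2(1) by blast
  then consider "i < k" | "k < i" by linarith
  then show ?thesis
  proof cases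
    case 1
    then have R: "(point \<xi> i, point \<xi> k) \<in> R" using point_R_iff[OF S] by blast
    have "point \<xi> i \<noteq> point \<xi> k" using R R_irrefl by metis
    then have "coloring {point \<xi> i, point \<xi> k} = color_at (point \<xi> k) (point \<xi> i)"
      using coloring_pair[OF point_in[OF S] point_in[OF S]] col_below[OF R] by simp
    then show ?thesis using color_at_point(3)[OF S v kN 2(2) 1] 2(1) by (simp add: embed_def)
  next
    case 2
    then have R: "(point \<xi> k, point \<xi> i) \<in> R" using point_R_iff[OF S] by blast
    have "point \<xi> i \<noteq> point \<xi> k" using R R_irrefl by metis
    then have "coloring {point \<xi> i, point \<xi> k} = color_at (point \<xi> i) (point \<xi> k)"
      using coloring_pair[OF point_in[OF S] point_in[OF S]] col_above[OF R] by simp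
    then show ?thesis using color_at_point(3)[OF S v \<open>i \<in> req_new \<xi>\<close> kN 2] \<open>y = Inr i\<close>
      by (simp add: embed_def insert_commute)
  qed
qed

lemma target_point:
  assumes S: "\<xi> \<in> S" and v: "admissible \<xi>" and k: "k \<in> req_new \<xi>"
  shows "target (point \<xi> k) = req_val \<xi> (Inr k)"
  unfolding target_def using color_at_point(1)[OF S v k] block_point[OF S] index_point[OF S] by simp

lemma pairs_memI: "x \<in> d \<Longrightarrow> y \<in> d \<Longrightarrow> x \<noteq> y \<Longrightarrow> {x, y} \<in> pairs d"
  unfolding pairs_def by blast

lemma admissibleI:
  assumes fd: "finite d" and ein: "\<forall>p\<in>pairs d. e p \<in> Om1" and sin: "\<forall>\<alpha>\<in>d. s \<alpha> \<in> P"
    and AA: "\<forall>\<alpha> \<beta>. Inl \<alpha> \<in> d \<and> Inl \<beta> \<in> d \<and> \<alpha> \<noteq> \<beta> \<longrightarrow> Aset e d (Inl \<alpha>) (Inl \<beta>) \<subseteq> Inl ` P"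
    and dom: "req_dom \<xi> = d" and col: "\<forall>p\<in>pairs d. req_color \<xi> p = e p" and val: "\<forall>x\<in>d. req_val \<xi> x = s x"
    and below: "\<forall>\<alpha>. Inl \<alpha> \<in> d \<longrightarrow> (\<alpha>, point \<xi> 0) \<in> R"
  shows "admissible \<xi>"
proof -
  have old: "req_old \<xi> = {\<alpha>. Inl \<alpha> \<in> d}" and new: "req_new \<xi> = {k. Inr k \<in> d}"
    unfolding req_old_def req_new_def dom by auto
  have distinct: "req_color \<xi> {Inl \<alpha>, Inr k} \<noteq> req_color \<xi> {Inl \<beta>, Inr k}"
    if k: "Inr k \<in> d" and \<alpha>: "Inl \<alpha> \<in> d" and \<beta>: "Inl \<beta> \<in> d" and ne: "\<alpha> \<noteq> \<beta>" for k \<alpha> \<beta>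
  proof
    assume "req_color \<xi> {Inl \<alpha>, Inr k} = req_color \<xi> {Inl \<beta>, Inr k}"
    then have "Inr k \<in> Aset e d (Inl \<alpha>) (Inl \<beta>)"
      using col pairs_memI[OF \<alpha> k] pairs_memI[OF \<beta> k] k unfolding Aset_def by auto
    then show False using AA \<alpha> \<beta> ne by blast
  qed
  show ?thesis
    unfolding admissible_def old new dom
    using fd below distinct col ein val sin pairs_memI[of "Inl _" d "Inr _"] pairs_memI[of "Inr _" d "Inr _"]
    by auto
qed

lemma realize:
  fixes d :: "('p + nat) set" and e :: "('p + nat) set \<Rightarrow> 'c" and s :: "'p + nat \<Rightarrow> 'p"
  assumes fd: "finite d" and dP: "d \<subseteq> Inl ` P \<union> range Inr"
    and ein: "\<forall>p\<in>pairs d. e p \<in> Om1" and sin: "\<forall>\<alpha>\<in>d. s \<alpha> \<in> P"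
    and ce: "\<forall>\<alpha> \<beta>. Inl \<alpha> \<in> d \<and> Inl \<beta> \<in> d \<and> \<alpha> \<noteq> \<beta> \<longrightarrow> coloring {\<alpha>, \<beta>} = e {Inl \<alpha>, Inl \<beta>}"
    and rs: "\<forall>\<alpha>. Inl \<alpha> \<in> d \<longrightarrow> target \<alpha> = s (Inl \<alpha>)"
    and AA: "\<forall>\<alpha> \<beta>. Inl \<alpha> \<in> d \<and> Inl \<beta> \<in> d \<and> \<alpha> \<noteq> \<beta> \<longrightarrow> Aset e d (Inl \<alpha>) (Inl \<beta>) \<subseteq> Inl ` P"
  shows "\<exists>\<iota>. inj_on \<iota> d \<and> (\<forall>\<alpha>\<in>d. \<iota> \<alpha> \<in> P) \<and> (\<forall>\<alpha>. Inl \<alpha> \<in> d \<longrightarrow> \<iota> (Inl \<alpha>) = \<alpha>) \<and>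
    (\<forall>\<alpha>\<in>d. \<forall>\<beta>\<in>d. \<alpha> \<noteq> \<beta> \<longrightarrow> coloring {\<iota> \<alpha>, \<iota> \<beta>} = e {\<alpha>, \<beta>}) \<and> (\<forall>\<alpha>\<in>d. target (\<iota> \<alpha>) = s \<alpha>)"
proof -
  define e' where "e' = (\<lambda>p. if p \<in> pairs d then e p else undefined)"
  define s' where "s' = (\<lambda>x. if x \<in> d then s x else undefined)"
  have "\<exists>\<xi>\<in>S. req \<xi> = (d, e', s') \<and> (\<forall>\<alpha>. Inl \<alpha> \<in> d \<longrightarrow> (\<alpha>, point \<xi> 0) \<in> R)"
    by (rule req_cofinal[OF fd dP]) (auto simp: e'_def s'_def ein sin)
  then obtain \<xi> where S: "\<xi> \<in> S" and req: "req \<xi> = (d, e', s')"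
    and below: "\<forall>\<alpha>. Inl \<alpha> \<in> d \<longrightarrow> (\<alpha>, point \<xi> 0) \<in> R"
    by blast
  have dom: "req_dom \<xi> = d" and col: "\<forall>p\<in>pairs d. req_color \<xi> p = e p"
    and val: "\<forall>x\<in>d. req_val \<xi> x = s x"
    unfolding req_dom_def req_color_def req_val_def req e'_def s'_def by auto
  have v: "admissible \<xi>" by (rule admissibleI[OF fd ein sin AA dom col val below])
  have colors: "coloring {embed \<xi> x, embed \<xi> y} = e {x, y}" if "x \<in> d" "y \<in> d" "x \<noteq> y" for x y
  proof (cases "x \<in> range Inl \<and> y \<in> range Inl")
    case True
    then obtain \<alpha> \<beta> where "x = Inl \<alpha>" "y = Inl \<beta>" by blast
    then show ?thesis using ce that by (simp add: embed_def)
  next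
    case False
    then consider k where "x = Inr k" | k where "y = Inr k" by (metis range_eqI sum.exhaust)
    then show ?thesis
      using embed_color[OF S v, of _ y] embed_color[OF S v, of _ x] that col pairs_memI[OF that] dom
      by cases (auto simp: embed_def insert_commute)
  qed
  have targets: "target (embed \<xi> x) = s x" if x: "x \<in> d" for x
    using x[folded dom]
  proof (cases rule: req_domE)
    case (1 \<alpha>) then show ?thesis using rs x by (simp add: embed_def)
  next
    case (2 k) then show ?thesis using target_point[OF S v] val x by (simp add: embed_def)
  qed
  show ?thesis
    using inj_on_embed[OF S v] embed_in[OF S v] colors targets dom by (auto simp: embed_def)
qed

theorem coloring_construction_main:
  "\<exists>(c :: 'p set \<Rightarrow> 'c) m (r :: 'p \<Rightarrow> 'p).
    (\<forall>p\<in>pairs P. c p \<in> Om1) \<and>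
    monotone_fin P m \<and>
    (\<forall>\<alpha>\<in>P. r \<alpha> \<in> P) \<and>
    (\<forall>a\<in>finsubs P. \<forall>\<alpha>\<in>m a. \<forall>\<beta>\<in>m a. \<alpha> \<noteq> \<beta> \<longrightarrow> Aset c P \<alpha> \<beta> \<subseteq> m a) \<and>
    (\<forall>(d::('p + nat) set) e s. finite d \<and> d \<subseteq> Inl ` P \<union> range Inr \<and>
       (\<forall>p\<in>pairs d. e p \<in> Om1) \<and>
       (\<forall>\<alpha>\<in>d. s \<alpha> \<in> P) \<and>
       (\<forall>\<alpha> \<beta>. Inl \<alpha> \<in> d \<and> Inl \<beta> \<in> d \<and> \<alpha> \<noteq> \<beta> \<longrightarrow> c {\<alpha>, \<beta>} = e {Inl \<alpha>, Inl \<beta>}) \<and>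
       (\<forall>\<alpha>. Inl \<alpha> \<in> d \<longrightarrow> r \<alpha> = s (Inl \<alpha>)) \<and>
       (\<forall>\<alpha> \<beta>. Inl \<alpha> \<in> d \<and> Inl \<beta> \<in> d \<and> \<alpha> \<noteq> \<beta> \<longrightarrow> Aset e d (Inl \<alpha>) (Inl \<beta>) \<subseteq> Inl ` P)
     \<longrightarrow> (\<exists>\<iota>. inj_on \<iota> d \<and> (\<forall>\<alpha>\<in>d. \<iota> \<alpha> \<in> P) \<and>
            (\<forall>\<alpha>. Inl \<alpha> \<in> d \<longrightarrow> \<iota> (Inl \<alpha>) = \<alpha>) \<and>
            (\<forall>\<alpha>\<in>d. \<forall>\<beta>\<in>d. \<alpha> \<noteq> \<beta> \<longrightarrow> c {\<iota> \<alpha>, \<iota> \<beta>} = e {\<alpha>, \<beta>}) \<and>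
            (\<forall>\<alpha>\<in>d. r (\<iota> \<alpha>) = s \<alpha>)))"
  using coloring_pairs_in monotone_hull target_in hull_A_closed realize
  by (intro exI[of _ coloring] exI[of _ hull] exI[of _ target] conjI ballI allI impI; (elim conjE)?; blast)

end

section \<open>Blocks and bookkeeping on \<open>\<omega>\<^sub>2\<close>\<close>

text \<open>\<open>decomp\<close> identifies \<open>\<omega>\<^sub>2\<close> with \<open>\<omega>\<^sub>2 \<times> \<nat>\<close>, ordered lexicographically; the blocks are the
  fibres \<open>{\<xi>} \<times> \<nat>\<close>.\<close>
abbreviation "W1 \<equiv> cardSuc natLeq"
abbreviation "W2 \<equiv> cardSuc W1"

lemma Card_order_W1: "Card_order W1" by (rule cardSuc_Card_order[OF natLeq_Card_order])
lemma Card_order_W2: "Card_order W2" by (rule cardSuc_Card_order[OF Card_order_W1])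

lemma infinite_omega1: "infinite omega1"
  unfolding omega1_def using cardSuc_finite[OF natLeq_Card_order] Field_natLeq by simp
lemma infinite_omega2: "infinite omega2"
  unfolding omega2_def using cardSuc_finite[OF Card_order_W1] infinite_omega1 unfolding omega1_def by simp
lemma card_omega1: "|omega1| =o W1" unfolding omega1_def by (rule card_of_Field_ordIso[OF Card_order_W1])
lemma card_omega2: "|omega2| =o W2" unfolding omega2_def by (rule card_of_Field_ordIso[OF Card_order_W2])

lemma card_omega1_less_omega2: "|omega1| <o |omega2|"
proof -
  have "W1 <o W2" by (rule cardSuc_greater[OF Card_order_W1])
  then have "|omega1| <o W2" by (rule ordIso_ordLess_trans[OF card_omega1])
  then show ?thesis by (rule ordLess_ordIso_trans[OF _ ordIso_symmetric[OF card_omega2]])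
qed

lemma card_nat_le_omega1: "|UNIV :: nat set| \<le>o |omega1|" by (rule infinite_iff_card_of_nat[THEN iffD1, OF infinite_omega1])
lemma card_finite_le_omega1: "finite A \<Longrightarrow> |A| \<le>o |omega1|"
  by (rule ordLess_imp_ordLeq[OF finite_ordLess_infinite2[OF _ infinite_omega1]])
lemma card_omega1_le_omega2: "|omega1| \<le>o |omega2|" by (rule ordLess_imp_ordLeq[OF card_omega1_less_omega2])

lemma card_under_le_omega1: "\<xi> \<in> omega2 \<Longrightarrow> |under W2 \<xi>| \<le>o |omega1|"
proof -
  assume x: "\<xi> \<in> omega2"
  have "|underS W2 \<xi>| <o W2" using card_of_underS[OF Card_order_W2] x unfolding omega2_def by blast
  then have "|underS W2 \<xi>| \<le>o W1"
    by (rule cardSuc_ordLeq_ordLess[OF Card_order_W1 card_of_Card_order, THEN iffD1])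
  then have a: "|underS W2 \<xi>| \<le>o |omega1|" by (rule ordLeq_ordIso_trans[OF _ ordIso_symmetric[OF card_omega1]])
  have b: "|{\<xi>}| \<le>o |omega1|" by (rule card_finite_le_omega1) simp
  have "under W2 \<xi> \<subseteq> underS W2 \<xi> \<union> {\<xi>}" unfolding under_def underS_def by auto
  then have c: "|under W2 \<xi>| \<le>o |underS W2 \<xi> \<union> {\<xi>}|" by (rule card_of_mono1)
  have "|underS W2 \<xi> \<union> {\<xi>}| \<le>o |omega1|"
    by (rule card_of_Un_ordLeq_infinite[OF infinite_omega1 a b])
  then show ?thesis by (rule ordLeq_transitive[OF c])
qed

lemma card_nat_le_omega2: "|UNIV :: nat set| \<le>o |omega2|" by (rule infinite_iff_card_of_nat[THEN iffD1, OF infinite_omega2])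

lemma decomp_exists: "\<exists>f. bij_betw f omega2 (omega2 \<times> (UNIV :: nat set))"
proof -
  have "|omega2 \<times> (UNIV :: nat set)| =o |omega2|"
    using card_of_Times_infinite[OF infinite_omega2 _ card_nat_le_omega2] by simp
  then have "|omega2| =o |omega2 \<times> (UNIV :: nat set)|" by (rule ordIso_symmetric)
  then show ?thesis using card_of_ordIso by blast
qed

definition decomp :: "nat set set \<Rightarrow> nat set set \<times> nat" where
  "decomp = (SOME f. bij_betw f omega2 (omega2 \<times> (UNIV :: nat set)))"
lemma bij_decomp: "bij_betw decomp omega2 (omega2 \<times> (UNIV :: nat set))"
  unfolding decomp_def by (rule someI_ex[OF decomp_exists])

definition lex_order :: "((nat set set \<times> nat) \<times> (nat set set \<times> nat)) set" where
  "lex_order = (W2 - Id) <*lex*> less_than"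
definition block_order :: "(nat set set \<times> nat set set) set" where
  "block_order = {(x, y). x \<in> omega2 \<and> y \<in> omega2 \<and> (decomp x, decomp y) \<in> lex_order}"

lemma Well_order_W2: "Well_order W2" using Card_order_W2 unfolding card_order_on_def by blast
lemma wf_W2: "wf (W2 - Id)" using Well_order_W2 unfolding well_order_on_def by blast
lemma linear_order_W2: "linear_order_on omega2 W2" using Well_order_W2 unfolding well_order_on_def omega2_def by blast
lemma trans_W2: "trans W2" using linear_order_W2 unfolding linear_order_on_def partial_order_on_def preorder_on_def by blast
lemma antisym_W2: "antisym W2" using linear_order_W2 unfolding linear_order_on_def partial_order_on_def by blast
lemma total_W2: "\<xi> \<in> omega2 \<Longrightarrow> \<zeta> \<in> omega2 \<Longrightarrow> \<xi> \<noteq> \<zeta> \<Longrightarrow> (\<xi>, \<zeta>) \<in> W2 \<or> (\<zeta>, \<xi>) \<in> W2"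
  using linear_order_W2 unfolding linear_order_on_def total_on_def by blast

lemma trans_W2_strict: "trans (W2 - Id)"
proof (rule transI)
  fix x y z assume a: "(x, y) \<in> W2 - Id" and b: "(y, z) \<in> W2 - Id"
  have "(x, z) \<in> W2" using a b trans_W2 unfolding trans_def by blast
  moreover have "x \<noteq> z"
  proof
    assume "x = z" then show False using a b antisym_W2 unfolding antisym_def by blast
  qed
  ultimately show "(x, z) \<in> W2 - Id" by simp
qed

lemma W2_strict_asym: "(x, y) \<in> W2 - Id \<Longrightarrow> (y, x) \<notin> W2 - Id"
  using antisym_W2 unfolding antisym_def by blast

lemma lex_order_iff: "((a, i), (b, k)) \<in> lex_order \<longleftrightarrow> (a, b) \<in> W2 - Id \<or> (a = b \<and> i < k)"
  unfolding lex_order_def by (simp add: less_than_iff)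

lemma decomp_in: "x \<in> omega2 \<Longrightarrow> decomp x \<in> omega2 \<times> UNIV"
  using bij_decomp unfolding bij_betw_def by blast
lemma decomp_inj: "x \<in> omega2 \<Longrightarrow> y \<in> omega2 \<Longrightarrow> decomp x = decomp y \<Longrightarrow> x = y"
  using bij_decomp unfolding bij_betw_def inj_on_def by blast

definition bpoint :: "nat set set \<Rightarrow> nat \<Rightarrow> nat set set" where
  "bpoint \<xi> k = inv_into omega2 decomp (\<xi>, k)"
definition bblock :: "nat set set \<Rightarrow> nat set set" where "bblock z = fst (decomp z)"
definition bindex :: "nat set set \<Rightarrow> nat" where "bindex z = snd (decomp z)"

lemma decomp_bpoint: "\<xi> \<in> omega2 \<Longrightarrow> decomp (bpoint \<xi> k) = (\<xi>, k)"
  unfolding bpoint_def using bij_decomp by (simp add: bij_betw_def f_inv_into_f)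
lemma bpoint_in: "\<xi> \<in> omega2 \<Longrightarrow> bpoint \<xi> k \<in> omega2"
  unfolding bpoint_def using bij_decomp by (simp add: bij_betw_def inv_into_into)

lemma wf_block_order: "wf block_order"
proof -
  have "wf (inv_image lex_order decomp)" unfolding lex_order_def by (rule wf_inv_image[OF wf_lex_prod[OF wf_W2 wf_less_than]])
  moreover have "block_order \<subseteq> inv_image lex_order decomp"
  proof
    fix p assume "p \<in> block_order"
    then obtain x y where "p = (x, y)" "(decomp x, decomp y) \<in> lex_order" unfolding block_order_def by blast
    then show "p \<in> inv_image lex_order decomp" unfolding inv_image_def by blast
  qed
  ultimately show ?thesis by (rule wf_subset)
qed

lemma trans_lex_order: "trans lex_order" unfolding lex_order_def by (rule trans_lex_prod[OF trans_W2_strict trans_less_than])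

lemma trans_block_order: "trans block_order"
proof (rule transI)
  fix x y z assume a: "(x, y) \<in> block_order" and b: "(y, z) \<in> block_order"
  have "(decomp x, decomp y) \<in> lex_order" "(decomp y, decomp z) \<in> lex_order" using a b unfolding block_order_def by blast+
  then have "(decomp x, decomp z) \<in> lex_order" using trans_lex_order unfolding trans_def by blast
  moreover have "x \<in> omega2" "z \<in> omega2" using a b unfolding block_order_def by blast+
  ultimately show "(x, z) \<in> block_order" unfolding block_order_def by blast
qed

lemma block_order_total: "x \<in> omega2 \<Longrightarrow> y \<in> omega2 \<Longrightarrow> x \<noteq> y \<Longrightarrow> (x, y) \<in> block_order \<or> (y, x) \<in> block_order"
proof -
  assume x: "x \<in> omega2" and y: "y \<in> omega2" and ne: "x \<noteq> y"
  obtain a i where a: "decomp x = (a, i)" by (cases "decomp x")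
  obtain b k where b: "decomp y = (b, k)" by (cases "decomp y")
  have ab: "a \<in> omega2" "b \<in> omega2" using decomp_in[OF x] decomp_in[OF y] a b by (metis SigmaD1)+
  have "decomp x \<noteq> decomp y" using decomp_inj[OF x y] ne by blast
  then have ne2: "(a, i) \<noteq> (b, k)" using a b by metis
  have "((a, i), (b, k)) \<in> lex_order \<or> ((b, k), (a, i)) \<in> lex_order"
  proof (cases "a = b")
    case True
    then have "i \<noteq> k" using ne2 by blast
    then have "i < k \<or> k < i" by linarith
    then show ?thesis unfolding lex_order_iff using True by blast
  next
    case False
    then show ?thesis unfolding lex_order_iff using total_W2[OF ab False] by blast
  qed
  then have "(decomp x, decomp y) \<in> lex_order \<or> (decomp y, decomp x) \<in> lex_order" using a b by metis
  then show ?thesis unfolding block_order_def using x y by blast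
qed

lemma bpoint_block_order_iff: "\<xi> \<in> omega2 \<Longrightarrow> (bpoint \<xi> i, bpoint \<xi> k) \<in> block_order \<longleftrightarrow> i < k"
proof -
  assume x: "\<xi> \<in> omega2"
  have p: "bpoint \<xi> i \<in> omega2" "bpoint \<xi> k \<in> omega2" using bpoint_in[OF x] by blast+
  have q: "decomp (bpoint \<xi> i) = (\<xi>, i)" "decomp (bpoint \<xi> k) = (\<xi>, k)" using decomp_bpoint[OF x] by blast+
  have "(bpoint \<xi> i, bpoint \<xi> k) \<in> block_order \<longleftrightarrow> (decomp (bpoint \<xi> i), decomp (bpoint \<xi> k)) \<in> lex_order"
    unfolding block_order_def using p by blast
  also have "\<dots> \<longleftrightarrow> ((\<xi>, i), (\<xi>, k)) \<in> lex_order" unfolding q ..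
  also have "\<dots> \<longleftrightarrow> i < k" unfolding lex_order_iff by blast
  finally show ?thesis .
qed

lemma block_order_convex: "\<xi> \<in> omega2 \<Longrightarrow> (bpoint \<xi> i, y) \<in> block_order \<Longrightarrow> (y, bpoint \<xi> j) \<in> block_order \<Longrightarrow> bblock y = \<xi>"
proof -
  assume x: "\<xi> \<in> omega2" and h1: "(bpoint \<xi> i, y) \<in> block_order" and h2: "(y, bpoint \<xi> j) \<in> block_order"
  obtain b l where b: "decomp y = (b, l)" by (cases "decomp y")
  have e1: "(decomp (bpoint \<xi> i), decomp y) \<in> lex_order" using h1 unfolding block_order_def by blast
  have "((\<xi>, i), (b, l)) \<in> lex_order" using e1 by (simp only: decomp_bpoint[OF x] b)
  then have 1: "(\<xi>, b) \<in> W2 - Id \<or> \<xi> = b" unfolding lex_order_iff by blast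
  have e2: "(decomp y, decomp (bpoint \<xi> j)) \<in> lex_order" using h2 unfolding block_order_def by blast
  have "((b, l), (\<xi>, j)) \<in> lex_order" using e2 by (simp only: decomp_bpoint[OF x] b)
  then have 2: "(b, \<xi>) \<in> W2 - Id \<or> \<xi> = b" unfolding lex_order_iff by blast
  have eq: "\<xi> = b" using 1 2 W2_strict_asym by blast
  have "bblock y = b" by (simp only: bblock_def b fst_conv)
  then show ?thesis using eq by simp
qed

lemma bpoint_bblock_bindex: "z \<in> omega2 \<Longrightarrow> bblock z \<in> omega2 \<and> bpoint (bblock z) (bindex z) = z"
proof -
  assume z: "z \<in> omega2"
  have pz: "decomp z \<in> omega2 \<times> UNIV" by (rule decomp_in[OF z])
  have e: "(bblock z, bindex z) = decomp z" unfolding bblock_def bindex_def by (rule prod.collapse)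
  have 1: "bblock z \<in> omega2" using pz unfolding bblock_def mem_Times_iff by blast
  have "inv_into omega2 decomp (decomp z) = z" by (rule inv_into_f_f[OF bij_betw_imp_inj_on[OF bij_decomp] z])
  then have 2: "bpoint (bblock z) (bindex z) = z" unfolding bpoint_def e .
  show ?thesis using 1 2 by blast
qed

lemma refl_W2: "\<xi> \<in> omega2 \<Longrightarrow> (\<xi>, \<xi>) \<in> W2"
  using linear_order_W2 unfolding linear_order_on_def partial_order_on_def preorder_on_def refl_on_def by blast

lemma card_of_le_refl: "|A| \<le>o |A|" by (rule ordIso_imp_ordLeq[OF card_of_refl])

definition inj_into :: "'a set \<Rightarrow> 'b set \<Rightarrow> 'a \<Rightarrow> 'b" where
  "inj_into A B = (SOME f. inj_on f A \<and> f ` A \<subseteq> B)"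

lemma inj_into:
  assumes "|A| \<le>o |B|" shows "inj_on (inj_into A B) A \<and> inj_into A B ` A \<subseteq> B"
proof -
  have "\<exists>f. inj_on f A \<and> f ` A \<subseteq> B" using card_of_ordLeq[THEN iffD2, OF assms] .
  then show ?thesis unfolding inj_into_def by (rule someI_ex)
qed

lemma card_below_le_omega1: "z \<in> omega2 \<Longrightarrow> |{y. (y, z) \<in> block_order}| \<le>o |omega1|"
proof -
  assume z: "z \<in> omega2"
  let ?Y = "{y. (y, z) \<in> block_order}"
  have sz: "bblock z \<in> omega2" using bpoint_bblock_bindex[OF z] by blast
  have inj: "inj_on decomp ?Y" using bij_decomp unfolding bij_betw_def inj_on_def block_order_def by blast
  have sub: "decomp ` ?Y \<subseteq> under W2 (bblock z) \<times> UNIV"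
  proof
    fix p assume "p \<in> decomp ` ?Y"
    then obtain y where y: "(y, z) \<in> block_order" "p = decomp y" by blast
    obtain b l where b: "decomp y = (b, l)" by (cases "decomp y")
    obtain a k where a: "decomp z = (a, k)" by (cases "decomp z")
    have "(decomp y, decomp z) \<in> lex_order" using y unfolding block_order_def by blast
    then have "((b, l), (a, k)) \<in> lex_order" unfolding a b .
    then have "(b, a) \<in> W2 - Id \<or> b = a" unfolding lex_order_iff by blast
    moreover have "a = bblock z" unfolding bblock_def a by simp
    ultimately have "(b, bblock z) \<in> W2" using refl_W2[OF sz] by blast
    then show "p \<in> under W2 (bblock z) \<times> UNIV" unfolding under_def using y b by simp
  qed
  have "|?Y| \<le>o |under W2 (bblock z) \<times> (UNIV :: nat set)|"
    using card_of_ordLeq[THEN iffD1] inj sub by blast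
  moreover have "|under W2 (bblock z) \<times> (UNIV :: nat set)| \<le>o |omega1|"
    by (rule card_of_Times_ordLeq_infinite[OF infinite_omega1 card_under_le_omega1[OF sz] card_nat_le_omega1])
  ultimately show ?thesis by (rule ordLeq_transitive)
qed

lemma inj_into_omega1_pairs: "inj_on (inj_into (omega1 \<times> omega1) omega1) (omega1 \<times> omega1) \<and>
    inj_into (omega1 \<times> omega1) omega1 ` (omega1 \<times> omega1) \<subseteq> omega1"
  by (rule inj_into[OF card_of_Times_ordLeq_infinite[OF infinite_omega1 card_of_le_refl card_of_le_refl]])

definition omega2_nat :: "(nat set set + nat) set" where "omega2_nat = omega2 <+> (UNIV :: nat set)"

type_synonym requirement =
  "(nat set set + nat) set \<times> ((nat set set + nat) set \<Rightarrow> nat set) \<times> (nat set set + nat \<Rightarrow> nat set set)"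

text \<open>Requirements are normalized to \<open>undefined\<close> off their domain, so that they are determined by
  their graphs; this is what bounds their number by \<open>\<omega>\<^sub>2\<close>.\<close>
definition requirements :: "requirement set" where
  "requirements = {(d, e, s). finite d \<and> d \<subseteq> omega2_nat \<and>
      (\<forall>p. p \<notin> pairs d \<longrightarrow> e p = undefined) \<and> (\<forall>p\<in>pairs d. e p \<in> omega1) \<and>
      (\<forall>x. x \<notin> d \<longrightarrow> s x = undefined) \<and> (\<forall>x\<in>d. s x \<in> omega2)}"

definition req_graph :: "requirement \<Rightarrow> (nat set set + nat) set \<times> ((nat set set + nat) set \<times> nat set) set \<times>
    ((nat set set + nat) \<times> nat set set) set" where
  "req_graph q = (case q of (d, e, s) \<Rightarrow> (d, (\<lambda>p. (p, e p)) ` pairs d, (\<lambda>x. (x, s x)) ` d))"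

lemma pairs_subset_Pow: "pairs d \<subseteq> Pow d" unfolding pairs_def by blast
lemma finite_pairs: "finite d \<Longrightarrow> finite (pairs d)" using pairs_subset_Pow finite_Pow_iff finite_subset by metis
lemma pairs_memD: "p \<in> pairs d \<Longrightarrow> finite p \<and> p \<subseteq> d" unfolding pairs_def by blast

lemma req_graph_into: "req_graph ` requirements \<subseteq> Fpow omega2_nat \<times> Fpow (Fpow omega2_nat \<times> omega1) \<times> Fpow (omega2_nat \<times> omega2)"
proof
  fix t assume "t \<in> req_graph ` requirements"
  then obtain d e s where q: "(d, e, s) \<in> requirements" "t = req_graph (d, e, s)" by (metis prod_cases3 imageE)
  have d: "finite d" "d \<subseteq> omega2_nat" "\<forall>p\<in>pairs d. e p \<in> omega1" "\<forall>x\<in>d. s x \<in> omega2" using q(1) unfolding requirements_def by auto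
  have 1: "d \<in> Fpow omega2_nat" using d unfolding Fpow_def by blast
  have 2: "(\<lambda>p. (p, e p)) ` pairs d \<in> Fpow (Fpow omega2_nat \<times> omega1)"
    unfolding Fpow_def using finite_pairs[OF d(1)] pairs_memD d(2,3) unfolding Fpow_def by blast
  have 3: "(\<lambda>x. (x, s x)) ` d \<in> Fpow (omega2_nat \<times> omega2)" unfolding Fpow_def using d by blast
  show "t \<in> Fpow omega2_nat \<times> Fpow (Fpow omega2_nat \<times> omega1) \<times> Fpow (omega2_nat \<times> omega2)"
    using 1 2 3 q(2) unfolding req_graph_def by simp
qed

lemma inj_on_req_graph: "inj_on req_graph requirements"
proof (rule inj_onI)
  fix q1 q2 assume q1: "q1 \<in> requirements" and q2: "q2 \<in> requirements" and eq: "req_graph q1 = req_graph q2"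
  obtain d1 e1 s1 where a: "q1 = (d1, e1, s1)" by (cases q1)
  obtain d2 e2 s2 where b: "q2 = (d2, e2, s2)" by (cases q2)
  have E: "d1 = d2" "(\<lambda>p. (p, e1 p)) ` pairs d1 = (\<lambda>p. (p, e2 p)) ` pairs d2"
     "(\<lambda>x. (x, s1 x)) ` d1 = (\<lambda>x. (x, s2 x)) ` d2" using eq unfolding a b req_graph_def by auto
  have ee: "e1 = e2"
  proof
    fix p show "e1 p = e2 p"
    proof (cases "p \<in> pairs d1")
      case True
      then have "(p, e1 p) \<in> (\<lambda>p. (p, e2 p)) ` pairs d2" using E(2) by blast
      then show ?thesis by auto
    next
      case False then show ?thesis using q1 q2 E(1) unfolding a b requirements_def by auto
    qed
  qed
  have ss: "s1 = s2"
  proof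
    fix x show "s1 x = s2 x"
    proof (cases "x \<in> d1")
      case True
      then have "(x, s1 x) \<in> (\<lambda>x. (x, s2 x)) ` d2" using E(3) by blast
      then show ?thesis by auto
    next
      case False then show ?thesis using q1 q2 E(1) unfolding a b requirements_def by auto
    qed
  qed
  show "q1 = q2" unfolding a b using E(1) ee ss by simp
qed

lemma card_Fpow_le_omega2: "|X| \<le>o |omega2| \<Longrightarrow> |Fpow X| \<le>o |omega2|"
proof -
  assume "|X| \<le>o |omega2|"
  then have "|Fpow X| \<le>o |Fpow omega2|" by (rule card_of_Fpow_mono)
  moreover have "|Fpow omega2| =o |omega2|" by (rule card_of_Fpow_infinite[OF infinite_omega2])
  ultimately show ?thesis by (rule ordLeq_ordIso_trans)
qed

lemma card_Times_le_omega2: "|X| \<le>o |omega2| \<Longrightarrow> |Z| \<le>o |omega2| \<Longrightarrow> |X \<times> Z| \<le>o |omega2|"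
  by (rule card_of_Times_ordLeq_infinite[OF infinite_omega2])

lemma card_omega2_nat: "|omega2_nat| \<le>o |omega2|"
proof -
  have "|omega2 <+> (UNIV :: nat set)| =o |omega2|" using card_of_Plus_infinite[OF infinite_omega2 card_nat_le_omega2] by blast
  then show ?thesis unfolding omega2_nat_def by (rule ordIso_imp_ordLeq)
qed

lemma card_requirements: "|requirements| \<le>o |omega2|"
proof -
  have a: "|Fpow omega2_nat| \<le>o |omega2|" by (rule card_Fpow_le_omega2[OF card_omega2_nat])
  have b: "|Fpow (Fpow omega2_nat \<times> omega1)| \<le>o |omega2|" by (rule card_Fpow_le_omega2[OF card_Times_le_omega2[OF a card_omega1_le_omega2]])
  have c: "|Fpow (omega2_nat \<times> omega2)| \<le>o |omega2|" by (rule card_Fpow_le_omega2[OF card_Times_le_omega2[OF card_omega2_nat card_of_le_refl]])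
  have "|Fpow omega2_nat \<times> Fpow (Fpow omega2_nat \<times> omega1) \<times> Fpow (omega2_nat \<times> omega2)| \<le>o |omega2|"
    by (rule card_Times_le_omega2[OF a card_Times_le_omega2[OF b c]])
  moreover have "|requirements| \<le>o |Fpow omega2_nat \<times> Fpow (Fpow omega2_nat \<times> omega1) \<times> Fpow (omega2_nat \<times> omega2)|"
    using card_of_ordLeq[THEN iffD1] inj_on_req_graph req_graph_into by blast
  ultimately show ?thesis using ordLeq_transitive by blast
qed

abbreviation req_code :: "nat set set \<times> requirement \<Rightarrow> nat set set" where
  "req_code \<equiv> inj_into (omega2 \<times> requirements) omega2"

lemma req_code: "inj_on req_code (omega2 \<times> requirements) \<and> req_code ` (omega2 \<times> requirements) \<subseteq> omega2"
  by (rule inj_into[OF card_Times_le_omega2[OF card_of_le_refl card_requirements]])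

definition req_at :: "nat set set \<Rightarrow> requirement" where
  "req_at \<xi> = (if \<xi> \<in> req_code ` (omega2 \<times> requirements) then snd (inv_into (omega2 \<times> requirements) req_code \<xi>) else undefined)"

lemma req_at_code: "\<zeta> \<in> omega2 \<Longrightarrow> q \<in> requirements \<Longrightarrow> req_at (req_code (\<zeta>, q)) = q"
  unfolding req_at_def using inv_into_f_f[OF conjunct1[OF req_code]] by auto

lemma req_at_cofinal:
  assumes q: "q \<in> requirements" and B0: "finite B0" "B0 \<subseteq> omega2"
  shows "\<exists>\<xi>\<in>omega2. req_at \<xi> = q \<and> (\<forall>\<beta>\<in>B0. (\<beta>, \<xi>) \<in> W2 - Id)"
proof (rule ccontr)
  assume no: "\<not> ?thesis"
  let ?X = "(\<lambda>\<xi>. req_code (\<xi>, q)) ` omega2"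
  have injq: "inj_on req_code (omega2 \<times> requirements)" using req_code by blast
  have Xin: "?X \<subseteq> omega2" using req_code q by blast
  have sub: "?X \<subseteq> (\<Union>\<beta>\<in>B0. under W2 \<beta>)"
  proof
    fix \<xi> assume x: "\<xi> \<in> ?X"
    then obtain \<zeta> where z: "\<zeta> \<in> omega2" "\<xi> = req_code (\<zeta>, q)" by blast
    have xo: "\<xi> \<in> omega2" using x Xin by blast
    have "req_at \<xi> = q" using req_at_code[OF z(1) q] z(2) by simp
    then obtain \<beta> where b: "\<beta> \<in> B0" "(\<beta>, \<xi>) \<notin> W2 - Id" using no xo by blast
    have bo: "\<beta> \<in> omega2" using b B0 by blast
    have "(\<xi>, \<beta>) \<in> W2"
    proof (cases "\<xi> = \<beta>")
      case True then show ?thesis using refl_W2 bo by simp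
    next
      case False then show ?thesis using total_W2[OF xo bo False] b by blast
    qed
    then show "\<xi> \<in> (\<Union>\<beta>\<in>B0. under W2 \<beta>)" using b unfolding under_def by blast
  qed
  have "|\<Union>\<beta>\<in>B0. under W2 \<beta>| \<le>o |omega1|"
    by (rule card_of_UNION_ordLeq_infinite[OF infinite_omega1 card_finite_le_omega1[OF B0(1)]]) (use card_under_le_omega1 B0 in blast)
  then have X1: "|?X| \<le>o |omega1|" using card_of_mono1[OF sub] ordLeq_transitive by blast
  have "inj_on (\<lambda>\<xi>. req_code (\<xi>, q)) omega2" using injq q unfolding inj_on_def by blast
  then have "|omega2| \<le>o |?X|" using card_of_ordLeq[THEN iffD1] by blast
  then have "|omega2| \<le>o |omega1|" using X1 ordLeq_transitive by blast
  then show False using card_omega1_less_omega2 not_ordLess_ordLeq by blast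
qed

lemma req_at_above:
  assumes q: "(d, e, s) \<in> requirements"
  shows "\<exists>\<xi>\<in>omega2. req_at \<xi> = (d, e, s) \<and> (\<forall>\<alpha>. Inl \<alpha> \<in> d \<longrightarrow> (\<alpha>, bpoint \<xi> 0) \<in> block_order)"
proof -
  let ?B = "bblock ` {\<alpha>. Inl \<alpha> \<in> d}"
  have d: "finite d" "d \<subseteq> omega2_nat" using q unfolding requirements_def by auto
  have old: "\<alpha> \<in> omega2" if "Inl \<alpha> \<in> d" for \<alpha>
    using d(2) that unfolding omega2_nat_def by auto
  have "finite {\<alpha>. Inl \<alpha> \<in> d}" using finite_vimageI[OF d(1), of Inl] by (simp add: vimage_def)
  then have "finite ?B" by (rule finite_imageI)
  moreover have "?B \<subseteq> omega2" using old bpoint_bblock_bindex by blast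
  ultimately have "\<exists>\<xi>\<in>omega2. req_at \<xi> = (d, e, s) \<and> (\<forall>\<beta>\<in>?B. (\<beta>, \<xi>) \<in> W2 - Id)"
    by (rule req_at_cofinal[OF q])
  then obtain \<xi> where \<xi>: "\<xi> \<in> omega2" "req_at \<xi> = (d, e, s)" "\<forall>\<beta>\<in>?B. (\<beta>, \<xi>) \<in> W2 - Id"
    by blast
  have "(\<alpha>, bpoint \<xi> 0) \<in> block_order" if \<alpha>: "Inl \<alpha> \<in> d" for \<alpha>
  proof -
    have "(bblock \<alpha>, \<xi>) \<in> W2 - Id" using \<xi>(3) \<alpha> by blast
    then have "((bblock \<alpha>, bindex \<alpha>), (\<xi>, 0)) \<in> lex_order" unfolding lex_order_iff by blast
    moreover have "decomp \<alpha> = (bblock \<alpha>, bindex \<alpha>)" unfolding bblock_def bindex_def by simp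
    ultimately have "(decomp \<alpha>, decomp (bpoint \<xi> 0)) \<in> lex_order" using decomp_bpoint[OF \<xi>(1)] by simp
    then show ?thesis unfolding block_order_def using old[OF \<alpha>] bpoint_in[OF \<xi>(1)] by blast
  qed
  then show ?thesis using \<xi> by blast
qed

lemma coloring_construction_omega2:
  assumes "lrcorner"
  shows "coloring_construction omega1 (inj_into (omega1 \<times> omega1) omega1) (SOME x. x \<in> omega1)
    omega2 block_order (\<lambda>z. inj_into {y. (y, z) \<in> block_order} omega1) omega2 bpoint bblock bindex req_at"
proof (unfold_locales)
  show "\<exists>g. lr_witness omega1 f F m g"
    if "\<forall>\<alpha>\<in>omega1. \<forall>\<beta>\<in>omega1. f \<alpha> \<beta> \<in> omega1" "F \<in> finsubs omega1" "monotone_fin omega1 m" for f F m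
    using assms that unfolding lrcorner_def lr_witness_def by blast
  show "(SOME x. x \<in> omega1) \<in> omega1" using infinite_omega1 some_in_eq by fastforce
  show "\<exists>\<xi>\<in>omega2. req_at \<xi> = (d, e, s) \<and> (\<forall>\<alpha>. Inl \<alpha> \<in> d \<longrightarrow> (\<alpha>, bpoint \<xi> 0) \<in> block_order)"
    if "finite d" "d \<subseteq> Inl ` omega2 \<union> range Inr"
      "\<forall>p. p \<notin> pairs d \<longrightarrow> e p = undefined" "\<forall>p\<in>pairs d. e p \<in> omega1"
      "\<forall>x. x \<notin> d \<longrightarrow> s x = undefined" "\<forall>x\<in>d. s x \<in> omega2" for d e s
    using that by (intro req_at_above) (auto simp: requirements_def omega2_nat_def)
qed (use inj_into_omega1_pairs inj_into[OF card_below_le_omega1] wf_block_order trans_block_order block_order_total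
       bpoint_in decomp_bpoint bpoint_bblock_bindex bpoint_block_order_iff block_order_convex
     in \<open>auto simp: block_order_def bblock_def bindex_def\<close>)

theorem mainTheorem11:
  assumes "lrcorner"
  shows "\<exists>(c :: nat set set set \<Rightarrow> nat set) m (r :: nat set set \<Rightarrow> nat set set).
    (\<forall>p\<in>pairs omega2. c p \<in> omega1) \<and>
    monotone_fin omega2 m \<and>
    (\<forall>\<alpha>\<in>omega2. r \<alpha> \<in> omega2) \<and>
    (\<forall>a\<in>finsubs omega2. \<forall>\<alpha>\<in>m a. \<forall>\<beta>\<in>m a. \<alpha> \<noteq> \<beta> \<longrightarrow> Aset c omega2 \<alpha> \<beta> \<subseteq> m a) \<and>
    (\<forall>d e s. finite d \<and> d \<subseteq> omega2_plus_omega \<and>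
       (\<forall>p\<in>pairs d. e p \<in> omega1) \<and>
       (\<forall>\<alpha>\<in>d. s \<alpha> \<in> omega2) \<and>
       (\<forall>\<alpha> \<beta>. Inl \<alpha> \<in> d \<and> Inl \<beta> \<in> d \<and> \<alpha> \<noteq> \<beta> \<longrightarrow> c {\<alpha>, \<beta>} = e {Inl \<alpha>, Inl \<beta>}) \<and>
       (\<forall>\<alpha>. Inl \<alpha> \<in> d \<longrightarrow> r \<alpha> = s (Inl \<alpha>)) \<and>
       (\<forall>\<alpha> \<beta>. Inl \<alpha> \<in> d \<and> Inl \<beta> \<in> d \<and> \<alpha> \<noteq> \<beta> \<longrightarrow> Aset e d (Inl \<alpha>) (Inl \<beta>) \<subseteq> Inl ` omega2)
     \<longrightarrow> (\<exists>\<iota>. inj_on \<iota> d \<and> (\<forall>\<alpha>\<in>d. \<iota> \<alpha> \<in> omega2) \<and>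
            (\<forall>\<alpha>. Inl \<alpha> \<in> d \<longrightarrow> \<iota> (Inl \<alpha>) = \<alpha>) \<and>
            (\<forall>\<alpha>\<in>d. \<forall>\<beta>\<in>d. \<alpha> \<noteq> \<beta> \<longrightarrow> c {\<iota> \<alpha>, \<iota> \<beta>} = e {\<alpha>, \<beta>}) \<and>
            (\<forall>\<alpha>\<in>d. r (\<iota> \<alpha>) = s \<alpha>)))"
proof -
  interpret coloring_construction omega1 "inj_into (omega1 \<times> omega1) omega1" "SOME x. x \<in> omega1"
    omega2 block_order "\<lambda>z. inj_into {y. (y, z) \<in> block_order} omega1" omega2 bpoint bblock bindex req_at
    by (rule coloring_construction_omega2[OF assms])
  show ?thesis unfolding omega2_plus_omega_def by (rule coloring_construction_main)
qed

end
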